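(* Let $\tilde Q=\|q_{ik}\|$ define a $\tilde Q$-expansion of $[0,1]$ with $\inf_{i,k}q_{ik}>0$, and let $\varPhi$ be the family of its cylinders. Let $F=F_\xi$ be the distribution function of a random variable $\xi$ with independent $\tilde Q$-digits. Assume that $$\lim_{n\to\infty}\frac{\ln\lambda(F(\varDelta_n(x)))}{\ln\lambda(\varDelta_n(x))}=1\quad\text{for all }x\in[0,1],$$ where $\varDelta_n(x)$ is the rank-$n$ cylinder containing $x$ and $\lambda$ is Lebesgue measure. Then the family $\varPhi'=F(\varPhi)=\{F(\varDelta):\varDelta\in\varPhi\}$ (taking interiors as the open intervals) is faithful for packing dimension calculation: $\dim_P(E,\varPhi')=\dim_{P(\mathit{unc})}(E)$ for every $E\subset[0,1]$.
   Context: $\tilde Q$-expansion: integers $N_k\ge2$, $q_{ik}>0$ ($k\in\mathbb N$, $i\in\{0,\dots,N_k-1\}$), $\sum_iq_{ik}=1$, $\prod_k\max_iq_{ik}=0$; with $\beta_{ik}=\sum_{l<i}q_{lk}$ each $x\in[0,1]$ is $x=\sum_k\beta_{a_kk}\prod_{j<k}q_{a_jj}$; the rank-$n$ cylinder $\{x:a_j(x)=c_j,j\le n\}$ is an interval of length $\prod_{j\le n}q_{c_jj}$. A random variable with independent $\tilde Q$-digits is $\xi=\sum_k\beta_{\xi_kk}\prod_{j<k}q_{\xi_jj}$ with independent digits $\xi_k$, $P(\xi_k=i)=p_{ik}$. In $\mathbb R$: an uncentered $\varepsilon$-packing of $E$ is a countable family of pairwise disjoint open intervals of length $\le\varepsilon$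 each meeting $E$; $\mathcal P^\alpha_{\varepsilon(\mathit{unc})}(E)=\sup\sum|E_i|^\alpha$, $\mathcal P^\alpha_{0(\mathit{unc})}=\lim_{\varepsilon\to0}$, $\mathcal P^\alpha_{(\mathit{unc})}(E)=\inf\{\sum_j\mathcal P^\alpha_{0(\mathit{unc})}(E_j):E\subset\bigcup E_j\}$, $\dim_{P(\mathit{unc})}(E)=\inf\{\alpha:\mathcal P^\alpha_{(\mathit{unc})}(E)=0\}$; $\dim_P(E,\varPhi')$ is the same using only packings by intervals from $\varPhi'$. *)

theory Defs
  imports "HOL-Probability.Probability"
begin

text \<open>Digit positions k are indexed from 0 (the paper indexes them from 1).
  The matrix entry q_{ik} is written q i k.\<close>

definition Qexp :: "(nat \<Rightarrow> nat) \<Rightarrow> (nat \<Rightarrow> nat \<Rightarrow> real) \<Rightarrow> bool" where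
  "Qexp N q \<longleftrightarrow> (\<forall>k. N k \<ge> 2) \<and> (\<forall>k i. i < N k \<longrightarrow> q i k > 0)
     \<and> (\<forall>k. (\<Sum>i<N k. q i k) = 1)
     \<and> (\<lambda>n. \<Prod>k<n. Max ((\<lambda>i. q i k) ` {..<N k})) \<longlonglongrightarrow> 0"

definition Qbeta :: "(nat \<Rightarrow> nat \<Rightarrow> real) \<Rightarrow> nat \<Rightarrow> nat \<Rightarrow> real" where
  "Qbeta q i k = (\<Sum>l<i. q l k)"

definition digit_seq :: "(nat \<Rightarrow> nat) \<Rightarrow> (nat \<Rightarrow> nat) \<Rightarrow> bool" where
  "digit_seq N c \<longleftrightarrow> (\<forall>j. c j < N j)"

definition cyl_left :: "(nat \<Rightarrow> nat \<Rightarrow> real) \<Rightarrow> (nat \<Rightarrow> nat) \<Rightarrow> nat \<Rightarrow> real" where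
  "cyl_left q c n = (\<Sum>k<n. Qbeta q (c k) k * (\<Prod>j<k. q (c j) j))"

definition cyl_len :: "(nat \<Rightarrow> nat \<Rightarrow> real) \<Rightarrow> (nat \<Rightarrow> nat) \<Rightarrow> nat \<Rightarrow> real" where
  "cyl_len q c n = (\<Prod>j<n. q (c j) j)"

definition cylinder :: "(nat \<Rightarrow> nat \<Rightarrow> real) \<Rightarrow> nat \<Rightarrow> (nat \<Rightarrow> nat) \<Rightarrow> real set" where
  "cylinder q n c = {cyl_left q c n .. cyl_left q c n + cyl_len q c n}"

definition Qxi :: "(nat \<Rightarrow> nat \<Rightarrow> real) \<Rightarrow> (nat \<Rightarrow> 'a \<Rightarrow> nat) \<Rightarrow> 'a \<Rightarrow> real" where
  "Qxi q d \<omega> = (\<Sum>k. Qbeta q (d k \<omega>) k * (\<Prod>j<k. q (d j \<omega>) j))"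

definition distF :: "'a measure \<Rightarrow> (nat \<Rightarrow> nat \<Rightarrow> real) \<Rightarrow> (nat \<Rightarrow> 'a \<Rightarrow> nat) \<Rightarrow> real \<Rightarrow> real" where
  "distF M q d x = measure M {\<omega> \<in> space M. Qxi q d \<omega> < x}"

text \<open>Packings: a countable set of pairs (a,b), a < b, standing for pairwise disjoint open
  intervals (a,b) of length at most eps, each meeting E, each admissible.\<close>
definition is_packing :: "(real \<times> real \<Rightarrow> bool) \<Rightarrow> real \<Rightarrow> real set \<Rightarrow> (real \<times> real) set \<Rightarrow> bool" where
  "is_packing adm \<epsilon> E P \<longleftrightarrow> countable P
     \<and> (\<forall>I\<in>P. adm I \<and> fst I < snd I \<and> snd I - fst I \<le> \<epsilon> \<and> {fst I<..<snd I} \<inter> E \<noteq> {})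
     \<and> (\<forall>I\<in>P. \<forall>J\<in>P. I \<noteq> J \<longrightarrow> {fst I<..<snd I} \<inter> {fst J<..<snd J} = {})"

definition pack_pre :: "(real \<times> real \<Rightarrow> bool) \<Rightarrow> real \<Rightarrow> real \<Rightarrow> real set \<Rightarrow> ennreal" where
  "pack_pre adm \<alpha> \<epsilon> E =
     (SUP P \<in> {P. is_packing adm \<epsilon> E P}. (\<Sum>\<^sub>\<infinity> I\<in>P. ennreal ((snd I - fst I) powr \<alpha>)))"

definition pack0 :: "(real \<times> real \<Rightarrow> bool) \<Rightarrow> real \<Rightarrow> real set \<Rightarrow> ennreal" where
  "pack0 adm \<alpha> E = (INF \<epsilon> \<in> {0<..}. pack_pre adm \<alpha> \<epsilon> E)"

definition pack_measure :: "(real \<times> real \<Rightarrow> bool) \<Rightarrow> real \<Rightarrow> real set \<Rightarrow> ennreal" where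
  "pack_measure adm \<alpha> E =
     (INF A \<in> {A :: nat \<Rightarrow> real set. E \<subseteq> (\<Union>j. A j)}. (\<Sum>j. pack0 adm \<alpha> (A j)))"

definition pack_dim :: "(real \<times> real \<Rightarrow> bool) \<Rightarrow> real set \<Rightarrow> real" where
  "pack_dim adm E = Inf {\<alpha>. \<alpha> \<ge> 0 \<and> pack_measure adm \<alpha> E = 0}"

text \<open>Uncentered packings: all open intervals are admissible.\<close>
definition unc_adm :: "real \<times> real \<Rightarrow> bool" where
  "unc_adm I = True"

definition Fcyl_adm :: "(nat \<Rightarrow> nat) \<Rightarrow> (nat \<Rightarrow> nat \<Rightarrow> real) \<Rightarrow> (real \<Rightarrow> real) \<Rightarrow> real \<times> real \<Rightarrow> bool" where
  "Fcyl_adm N q F I \<longleftrightarrow> (\<exists>n c. digit_seq N c \<and>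
      I = (F (cyl_left q c n), F (cyl_left q c n + cyl_len q c n)))"

end

theory Submission
  imports Defs
begin

text \<open>Every interval of \<open>\<Phi>'\<close> is admissible for uncentered packings, so only
  \<open>dim_P(E, \<Phi>') \<ge> dim_P(E)\<close> needs proof. The log-ratio condition makes \<open>F\<close> continuous,
  rules out an atom of \<open>\<xi>\<close> at \<open>1\<close> (so \<open>F\<close> maps \<open>[0,1]\<close> onto \<open>[0,1]\<close>), and gives
  \<open>|\<Delta>_n|^t \<le> \<lambda>(F(\<Delta>_n(x))) \<le> |\<Delta>_n|^(1/t)\<close> for large \<open>n\<close>, any \<open>t > 1\<close>. As consecutive cylinders shrink by at most the factor \<open>\<delta> = inf q\<close>, every
  \<open>y = F(x)\<close> off the countable set of images of cylinder endpoints then lies, at each small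
  scale \<open>r\<close>, in an interval of \<open>\<Phi>'\<close> of length between \<open>\<delta>^t r^(t^2)\<close> and \<open>r\<close>. On the
  countably many pieces of \<open>E\<close> where this holds uniformly, a finite \<open>\<Phi>'\<close>-packing premeasure
  in dimension \<open>\<alpha>\<close> bounds the number of \<open>r\<close>-mesh cells meeting the piece by \<open>C r^(-\<alpha> t^2)\<close>,
  so the uncentered packing measure vanishes in every dimension above \<open>\<alpha> t^2\<close>; let \<open>t \<rightarrow> 1\<close>.\<close>

section \<open>Mesh counts and packing measures\<close>

definition mesh_count :: "real set \<Rightarrow> real \<Rightarrow> nat" where
  "mesh_count S r = card ((\<lambda>y. \<lfloor>y / r\<rfloor>) ` S)"

lemma mesh_image_subset:
  assumes "S \<subseteq> {0..1}" "0 < r"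
  shows "(\<lambda>y. \<lfloor>y / r\<rfloor>) ` S \<subseteq> {0..\<lfloor>1 / r\<rfloor>}"
proof
  fix k assume "k \<in> (\<lambda>y. \<lfloor>y / r\<rfloor>) ` S"
  then obtain y where y: "y \<in> S" "k = \<lfloor>y / r\<rfloor>" by auto
  with assms have "0 \<le> y / r" "y / r \<le> 1 / r" by (auto simp: divide_right_mono)
  then show "k \<in> {0..\<lfloor>1 / r\<rfloor>}" using y by (auto intro: floor_mono)
qed

lemma finite_mesh_image:
  assumes "S \<subseteq> {0..1}" "0 < r"
  shows "finite ((\<lambda>y. \<lfloor>y / r\<rfloor>) ` S)"
  using mesh_image_subset[OF assms] by (rule finite_subset) simp

lemma mesh_bounds:
  fixes y r :: real
  assumes "0 < r"
  shows "of_int \<lfloor>y / r\<rfloor> * r \<le> y" "y < (of_int \<lfloor>y / r\<rfloor> + 1) * r"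
proof -
  have "of_int \<lfloor>y / r\<rfloor> \<le> y / r" "y / r < of_int \<lfloor>y / r\<rfloor> + 1" by linarith+
  then show "of_int \<lfloor>y / r\<rfloor> * r \<le> y" "y < (of_int \<lfloor>y / r\<rfloor> + 1) * r"
    by (simp_all only: pos_le_divide_eq[OF assms] pos_divide_less_eq[OF assms])
qed

lemma is_packing_disjoint:
  assumes "is_packing adm \<epsilon> E P" "I \<in> P" "J \<in> P" "I \<noteq> J"
  shows "snd I \<le> fst J \<or> snd J \<le> fst I"
proof (rule ccontr)
  assume "\<not> ?thesis"
  moreover have "fst I < snd I" "fst J < snd J" using assms unfolding is_packing_def by auto
  ultimately have "(max (fst I) (fst J) + min (snd I) (snd J)) / 2 \<in> {fst I<..<snd I} \<inter> {fst J<..<snd J}"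
    by (auto simp: max_def min_def)
  then show False using assms unfolding is_packing_def by blast
qed

lemma is_packing_meets:
  assumes "is_packing adm \<epsilon> E P" "I \<in> P"
  obtains y where "y \<in> E" "fst I < y" "y < snd I"
proof -
  have "{fst I<..<snd I} \<inter> E \<noteq> {}" using assms unfolding is_packing_def by blast
  then show thesis using that by auto
qed

lemma is_packing_mono_set:
  assumes "S \<subseteq> T" "is_packing adm \<epsilon> S P"
  shows "is_packing adm \<epsilon> T P"
  using assms unfolding is_packing_def by blast

lemma is_packing_subset:
  assumes "is_packing adm \<epsilon> S P" "P' \<subseteq> P"
  shows "is_packing adm \<epsilon> S P'"
  using assms(1) countable_subset[OF assms(2)] assms(2) unfolding is_packing_def by (simp add: subset_eq)

lemma pack_pre_le_if_finite_packings_le: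
  assumes "\<And>P. is_packing adm \<epsilon> S P \<Longrightarrow> finite P \<Longrightarrow> (\<Sum>I\<in>P. (snd I - fst I) powr \<alpha>) \<le> B"
  shows "pack_pre adm \<alpha> \<epsilon> S \<le> ennreal B"
  unfolding pack_pre_def
proof (rule SUP_least, rule infsum_le_finite_sums)
  fix P F assume "P \<in> {P. is_packing adm \<epsilon> S P}" "finite F" "F \<subseteq> P"
  then have "(\<Sum>I\<in>F. (snd I - fst I) powr \<alpha>) \<le> B" using assms is_packing_subset[of adm \<epsilon> S P F] by simp
  then show "(\<Sum>I\<in>F. ennreal ((snd I - fst I) powr \<alpha>)) \<le> ennreal B" by (simp add: sum_ennreal ennreal_leI)
qed (rule nonneg_summable_on_complete, simp)

lemma sum_powr_le_pack_pre:
  assumes "is_packing adm \<epsilon> S P" "finite P"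
  shows "ennreal (\<Sum>I\<in>P. (snd I - fst I) powr \<alpha>) \<le> pack_pre adm \<alpha> \<epsilon> S"
proof -
  have "ennreal (\<Sum>I\<in>P. (snd I - fst I) powr \<alpha>) = (\<Sum>\<^sub>\<infinity>I\<in>P. ennreal ((snd I - fst I) powr \<alpha>))"
    using assms(2) by (simp add: sum_ennreal)
  also have "\<dots> \<le> pack_pre adm \<alpha> \<epsilon> S" unfolding pack_pre_def using assms(1) by (intro SUP_upper) simp
  finally show ?thesis .
qed

lemma pack_pre_mono_set:
  assumes "S \<subseteq> T"
  shows "pack_pre adm \<alpha> \<epsilon> S \<le> pack_pre adm \<alpha> \<epsilon> T"
  unfolding pack_pre_def
  by (rule SUP_subset_mono) (use is_packing_mono_set[OF assms] in auto)

lemma pack0_mono_set: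
  assumes "S \<subseteq> T"
  shows "pack0 adm \<alpha> S \<le> pack0 adm \<alpha> T"
  unfolding pack0_def by (rule INF_mono') (rule pack_pre_mono_set[OF assms])

lemma pack_pre_mono_adm:
  assumes "\<And>I. adm I \<Longrightarrow> adm' I"
  shows "pack_pre adm \<alpha> \<epsilon> E \<le> pack_pre adm' \<alpha> \<epsilon> E"
  unfolding pack_pre_def
  by (rule SUP_subset_mono) (use assms in \<open>auto simp: is_packing_def\<close>)

lemma pack0_mono_adm:
  assumes "\<And>I. adm I \<Longrightarrow> adm' I"
  shows "pack0 adm \<alpha> E \<le> pack0 adm' \<alpha> E"
  unfolding pack0_def by (rule INF_mono') (rule pack_pre_mono_adm[OF assms])

lemma pack_measure_mono_adm:
  assumes "\<And>I. adm I \<Longrightarrow> adm' I"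
  shows "pack_measure adm \<alpha> E \<le> pack_measure adm' \<alpha> E"
  unfolding pack_measure_def
  by (rule INF_mono') (rule suminf_le[OF pack0_mono_adm[OF assms] summableI summableI])

lemma pack_measure_eq_0_if_countable_cover:
  assumes "countable \<T>" "\<T> \<noteq> {}" "E \<subseteq> \<Union>\<T>" "\<And>T. T \<in> \<T> \<Longrightarrow> pack0 adm \<beta> T = 0"
  shows "pack_measure adm \<beta> E = 0"
proof -
  define A where "A = from_nat_into \<T>"
  have range_A: "range A = \<T>" unfolding A_def using assms(1,2) by simp
  then have "pack0 adm \<beta> (A j) = 0" for j using assms(4) by blast
  moreover have "E \<subseteq> (\<Union>j. A j)" using assms(3) range_A by auto
  then have "pack_measure adm \<beta> E \<le> (\<Sum>j. pack0 adm \<beta> (A j))"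
    unfolding pack_measure_def by (intro INF_lower) simp
  ultimately show ?thesis by simp
qed

definition dyadic_scale :: "real \<Rightarrow> nat" where
  "dyadic_scale w = (LEAST k. (1/2) ^ Suc k < w)"

lemma dyadic_scale:
  assumes "0 < w" "w \<le> 1"
  shows "(1/2) ^ Suc (dyadic_scale w) < w" "w \<le> (1/2) ^ dyadic_scale w"
proof -
  obtain k where "(1/2::real) ^ k < w" using real_arch_pow_inv[OF assms(1), of "1/2"] by auto
  moreover have "(1/2::real) ^ Suc k \<le> (1/2) ^ k" by (rule power_decreasing) auto
  ultimately have "\<exists>k. (1/2::real) ^ Suc k < w" by (meson le_less_trans)
  then show "(1/2) ^ Suc (dyadic_scale w) < w" unfolding dyadic_scale_def by (rule LeastI_ex)
  show "w \<le> (1/2) ^ dyadic_scale w"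
  proof (cases "dyadic_scale w")
    case (Suc j)
    then have "\<not> (1/2::real) ^ Suc j < w" unfolding dyadic_scale_def by (metis lessI not_less_Least)
    then show ?thesis using Suc by simp
  qed (use assms in simp)
qed

lemma inj_on_mesh_midpoint:
  assumes P: "is_packing adm \<epsilon> S P" and "0 < s" and wide: "\<And>I. I \<in> P \<Longrightarrow> s < snd I - fst I"
  shows "inj_on (\<lambda>I. \<lfloor>(fst I + snd I) / 2 / s\<rfloor>) P"
proof (rule inj_onI, rule ccontr)
  fix I J assume IJ: "I \<in> P" "J \<in> P" "\<lfloor>(fst I + snd I) / 2 / s\<rfloor> = \<lfloor>(fst J + snd J) / 2 / s\<rfloor>" "I \<noteq> J"
  have "snd I \<le> fst J \<or> snd J \<le> fst I" using is_packing_disjoint[OF P IJ(1,2,4)] .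
  then have "s < \<bar>(fst I + snd I) / 2 - (fst J + snd J) / 2\<bar>"
    using wide[OF IJ(1)] wide[OF IJ(2)] by (auto simp: abs_real_def field_simps)
  moreover have "(fst I + snd I) / 2 / s - (fst J + snd J) / 2 / s = ((fst I + snd I) / 2 - (fst J + snd J) / 2) / s"
    by (simp only: diff_divide_distrib)
  ultimately have "1 < \<bar>(fst I + snd I) / 2 / s - (fst J + snd J) / 2 / s\<bar>"
    using \<open>0 < s\<close> by (simp add: abs_divide)
  then show False using IJ(3) by linarith
qed

text \<open>Packing intervals of a common dyadic scale have length comparable to the mesh width,
  so their midpoints lie in distinct mesh cells next to cells meeting the set.\<close>
lemma card_dyadic_class_le:
  assumes P: "is_packing adm \<epsilon> S P" and "\<epsilon> \<le> 1" and S: "S \<subseteq> {0..1}"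
  shows "card {I\<in>P. dyadic_scale (snd I - fst I) = k} \<le> 3 * mesh_count S ((1/2) ^ Suc k)"
proof -
  define s :: real where "s = (1/2) ^ Suc k"
  have s: "0 < s" unfolding s_def by simp
  define C where "C = {I\<in>P. dyadic_scale (snd I - fst I) = k}"
  define mid where "mid I = (fst I + snd I) / 2 / s" for I :: "real \<times> real"
  have width: "s < snd I - fst I \<and> snd I - fst I \<le> 2 * s" if "I \<in> C" for I
  proof -
    have "0 < snd I - fst I" "snd I - fst I \<le> 1"
      using that P \<open>\<epsilon> \<le> 1\<close> unfolding C_def is_packing_def by auto
    from dyadic_scale[OF this] that show ?thesis unfolding C_def s_def by auto
  qed
  have "inj_on (\<lambda>I. \<lfloor>mid I\<rfloor>) C"
    unfolding mid_def using width by (intro inj_on_mesh_midpoint[OF is_packing_subset[OF P] s]) (auto simp: C_def)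
  moreover have "(\<lambda>I. \<lfloor>mid I\<rfloor>) ` C \<subseteq> (\<lambda>(e, i). i + e) ` ({-1, 0, 1} \<times> (\<lambda>y. \<lfloor>y / s\<rfloor>) ` S)"
  proof
    fix j assume "j \<in> (\<lambda>I. \<lfloor>mid I\<rfloor>) ` C"
    then obtain I where I: "I \<in> C" "j = \<lfloor>mid I\<rfloor>" by auto
    then obtain y where y: "y \<in> S" "fst I < y" "y < snd I"
      using is_packing_meets[OF P, of I] unfolding C_def by auto
    have "\<bar>(fst I + snd I) / 2 - y\<bar> < s" using y width[OF I(1)] by (auto simp: abs_real_def field_simps)
    moreover have "mid I - y / s = ((fst I + snd I) / 2 - y) / s"
      unfolding mid_def by (simp only: diff_divide_distrib)
    ultimately have "\<bar>mid I - y / s\<bar> < 1" using s by (simp add: abs_divide)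
    then have "-1 \<le> j - \<lfloor>y / s\<rfloor>" "j - \<lfloor>y / s\<rfloor> \<le> 1" unfolding I(2) by linarith+
    then have "j - \<lfloor>y / s\<rfloor> \<in> {-1, 0, 1}" by auto
    then show "j \<in> (\<lambda>(e, i). i + e) ` ({-1, 0, 1} \<times> (\<lambda>y. \<lfloor>y / s\<rfloor>) ` S)"
      using y(1) by (intro image_eqI[of _ _ "(j - \<lfloor>y / s\<rfloor>, \<lfloor>y / s\<rfloor>)"]) auto
  qed
  moreover have "finite ({-1, 0, 1::int} \<times> (\<lambda>y. \<lfloor>y / s\<rfloor>) ` S)"
    using finite_mesh_image[OF S s] by simp
  ultimately have "card C \<le> card ({-1, 0, 1::int} \<times> (\<lambda>y. \<lfloor>y / s\<rfloor>) ` S)"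
    by (meson card_image_le card_inj_on_le finite_imageI order_trans)
  also have "\<dots> = 3 * mesh_count S s" by (simp add: card_cartesian_product mesh_count_def)
  finally show ?thesis unfolding C_def s_def .
qed

lemma sum_power_le_tail:
  fixes \<rho> :: real
  assumes "0 \<le> \<rho>" "\<rho> < 1" "finite K" "K \<subseteq> {m..}"
  shows "(\<Sum>k\<in>K. \<rho> ^ k) \<le> \<rho> ^ m / (1 - \<rho>)"
proof -
  have inj: "inj_on (\<lambda>k. k - m) K" using assms(4) by (intro inj_onI) (metis atLeast_iff eq_diff_iff subsetD)
  have "(\<Sum>k\<in>K. \<rho> ^ k) = (\<Sum>k\<in>K. \<rho> ^ m * \<rho> ^ (k - m))"
    using assms(4) by (intro sum.cong) (auto simp: power_add[symmetric])
  also have "\<dots> = \<rho> ^ m * (\<Sum>i\<in>(\<lambda>k. k - m) ` K. \<rho> ^ i)"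
    by (simp add: sum_distrib_left sum.reindex[OF inj])
  also have "\<dots> \<le> \<rho> ^ m * (\<Sum>i. \<rho> ^ i)"
    using assms by (intro mult_left_mono sum_le_suminf summable_geometric) auto
  also have "\<dots> = \<rho> ^ m / (1 - \<rho>)" using assms by (simp add: suminf_geometric divide_inverse)
  finally show ?thesis .
qed

lemma half_power_powr: "((1/2::real) ^ n) powr a = 2 powr (- (real n * a))"
proof -
  have "(1/2::real) ^ n = 2 powr (- real n)"
    by (simp add: power_one_over powr_minus_divide powr_realpow)
  then show ?thesis by (simp add: powr_powr)
qed

lemma sum_powr_dyadic_class_le:
  assumes P: "is_packing adm \<epsilon> S P" "\<epsilon> \<le> 1" and S: "S \<subseteq> {0..1}" and "0 \<le> \<beta>"
    and mesh: "real (mesh_count S ((1/2) ^ Suc k)) \<le> C * 2 powr (real (Suc k) * s)"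
  shows "(\<Sum>I\<in>{I\<in>P. dyadic_scale (snd I - fst I) = k}. (snd I - fst I) powr \<beta>)
    \<le> 3 * C * 2 powr s * (2 powr (s - \<beta>)) ^ k"
proof -
  let ?C = "{I\<in>P. dyadic_scale (snd I - fst I) = k}"
  have "(\<Sum>I\<in>?C. (snd I - fst I) powr \<beta>) \<le> card ?C * ((1/2) ^ k) powr \<beta>"
  proof (rule sum_bounded_above)
    fix I assume I: "I \<in> ?C"
    then have "0 < snd I - fst I" "snd I - fst I \<le> 1" using P unfolding is_packing_def by auto
    with dyadic_scale(2)[OF this] I show "(snd I - fst I) powr \<beta> \<le> ((1/2) ^ k) powr \<beta>"
      using \<open>0 \<le> \<beta>\<close> by (intro powr_mono2) auto
  qed
  also have "\<dots> \<le> (3 * (C * 2 powr (real (Suc k) * s))) * 2 powr (- (real k * \<beta>))"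
  proof -
    have "real (card ?C) \<le> 3 * (C * 2 powr (real (Suc k) * s))"
      using card_dyadic_class_le[OF P S, of k] mesh by linarith
    then show ?thesis unfolding half_power_powr by (rule mult_right_mono) simp
  qed
  also have "\<dots> = 3 * C * 2 powr s * (2 powr (s - \<beta>)) ^ k"
  proof -
    have "real (Suc k) * s + - (real k * \<beta>) = s + real k * (s - \<beta>)" by (simp add: algebra_simps)
    then have "2 powr (real (Suc k) * s) * 2 powr (- (real k * \<beta>)) = 2 powr s * (2 powr (s - \<beta>)) ^ k"
      unfolding powr_power[of 2, simplified] by (simp only: powr_add[symmetric])
    then show ?thesis by (simp only: mult_ac)
  qed
  finally show ?thesis .
qed

lemma sum_powr_finite_packing_le:
  assumes P: "is_packing adm ((1/2) ^ Suc J) S P" "finite P" and S: "S \<subseteq> {0..1}"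
    and s: "0 \<le> s" "s < \<beta>" and "0 \<le> C"
    and mesh: "\<And>k. J < k \<Longrightarrow> real (mesh_count S ((1/2) ^ Suc k)) \<le> C * 2 powr (real (Suc k) * s)"
  shows "(\<Sum>I\<in>P. (snd I - fst I) powr \<beta>)
    \<le> 3 * C * 2 powr s * (2 powr (s - \<beta>)) ^ Suc J / (1 - 2 powr (s - \<beta>))"
proof -
  define \<rho> :: real where "\<rho> = 2 powr (s - \<beta>)"
  have \<rho>: "0 \<le> \<rho>" "\<rho> < 1" unfolding \<rho>_def using s by (auto intro: powr_less_one)
  define g where "g I = dyadic_scale (snd I - fst I)" for I :: "real \<times> real"
  have eps: "(1/2::real) ^ Suc J \<le> 1" by (rule power_le_one) auto
  have scale: "J < g I" if "I \<in> P" for I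
  proof -
    have "0 < snd I - fst I" "snd I - fst I \<le> (1/2) ^ Suc J" using P(1) that unfolding is_packing_def by auto
    then have "(1/2::real) ^ Suc (g I) < (1/2) ^ Suc J"
      using dyadic_scale(1)[of "snd I - fst I"] eps unfolding g_def by linarith
    then show ?thesis by (simp add: power_strict_decreasing_iff)
  qed
  have "(\<Sum>I\<in>P. (snd I - fst I) powr \<beta>) = (\<Sum>k\<in>g ` P. \<Sum>I\<in>{I\<in>P. g I = k}. (snd I - fst I) powr \<beta>)"
    using P(2) by (rule sum.image_gen)
  also have "\<dots> \<le> (\<Sum>k\<in>g ` P. 3 * C * 2 powr s * \<rho> ^ k)"
    using sum_powr_dyadic_class_le[OF P(1) eps S _ mesh] scale s unfolding g_def \<rho>_def
    by (intro sum_mono) auto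
  also have "\<dots> = 3 * C * 2 powr s * (\<Sum>k\<in>g ` P. \<rho> ^ k)" by (simp add: sum_distrib_left)
  also have "\<dots> \<le> 3 * C * 2 powr s * (\<rho> ^ Suc J / (1 - \<rho>))"
  proof (rule mult_left_mono)
    have "g ` P \<subseteq> {Suc J..}" using scale by (auto simp: Suc_le_eq)
    from sum_power_le_tail[OF \<rho> finite_imageI[OF P(2)] this]
    show "(\<Sum>k\<in>g ` P. \<rho> ^ k) \<le> \<rho> ^ Suc J / (1 - \<rho>)" .
  qed (use \<open>0 \<le> C\<close> in simp)
  finally show ?thesis unfolding \<rho>_def by simp
qed

text \<open>Upper box dimension bounds packing dimension.\<close>
lemma pack0_eq_0_if_mesh_count_le:
  assumes S: "S \<subseteq> {0..1}" and s: "0 \<le> s" "s < \<beta>" and C: "0 \<le> C" and "0 < r1"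
    and mesh: "\<And>r. 0 < r \<Longrightarrow> r \<le> r1 \<Longrightarrow> real (mesh_count S r) \<le> C * r powr (-s)"
  shows "pack0 adm \<beta> S = 0"
proof -
  define \<rho> :: real where "\<rho> = 2 powr (s - \<beta>)"
  have \<rho>: "0 \<le> \<rho>" "\<rho> < 1" unfolding \<rho>_def using s by (auto intro: powr_less_one)
  define B where "B J = 3 * C * 2 powr s * \<rho> ^ Suc J / (1 - \<rho>)" for J
  have half: "(\<lambda>J. (1/2::real) ^ Suc J) \<longlonglongrightarrow> 0"
    by (intro LIMSEQ_Suc LIMSEQ_power_zero) simp
  have bound: "pack0 adm \<beta> S \<le> ennreal (B J)" if J: "(1/2) ^ Suc J \<le> r1" for J
  proof -
    have mesh_J: "real (mesh_count S ((1/2) ^ Suc k)) \<le> C * 2 powr (real (Suc k) * s)" if "J < k" for k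
    proof -
      have "(1/2::real) ^ Suc k \<le> (1/2) ^ Suc J" using that by (intro power_decreasing) auto
      then have "(1/2::real) ^ Suc k \<le> r1" using J by (rule order_trans)
      then have "real (mesh_count S ((1/2) ^ Suc k)) \<le> C * ((1/2) ^ Suc k) powr (-s)"
        by (rule mesh[rotated]) simp
      also have "((1/2::real) ^ Suc k) powr (-s) = 2 powr (real (Suc k) * s)"
        unfolding half_power_powr by simp
      finally show ?thesis .
    qed
    have "pack_pre adm \<beta> ((1/2) ^ Suc J) S \<le> ennreal (B J)"
      using sum_powr_finite_packing_le[OF _ _ S s C mesh_J]
      unfolding B_def \<rho>_def by (intro pack_pre_le_if_finite_packings_le)
    then show ?thesis unfolding pack0_def by (intro INF_lower2[of "(1/2) ^ Suc J"]) auto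
  qed
  have "eventually (\<lambda>J. (1/2::real) ^ Suc J \<le> r1) sequentially"
    using order_tendstoD(2)[OF half \<open>0 < r1\<close>] by (rule eventually_mono) simp
  then have ev: "eventually (\<lambda>J. pack0 adm \<beta> S \<le> ennreal (B J)) sequentially"
    by (rule eventually_mono) (rule bound)
  have "(\<lambda>J. ennreal (B J)) \<longlonglongrightarrow> ennreal 0"
  proof -
    have "(\<lambda>J. \<rho> ^ Suc J) \<longlonglongrightarrow> 0" using \<rho> by (intro LIMSEQ_Suc LIMSEQ_power_zero) simp
    then have "B \<longlonglongrightarrow> 3 * C * 2 powr s * 0 / (1 - \<rho>)"
      unfolding B_def by (intro tendsto_divide tendsto_mult tendsto_const) (use \<rho> in auto)
    then show ?thesis by (intro tendsto_ennrealI) simp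
  qed
  from tendsto_lowerbound[OF this ev] show ?thesis by simp
qed

lemma pack0_singleton_eq_0:
  assumes "S \<subseteq> {p}" "S \<subseteq> {0..1}" "0 < \<beta>"
  shows "pack0 adm \<beta> S = 0"
proof (rule pack0_eq_0_if_mesh_count_le[OF assms(2), of 0 \<beta> 1 1])
  fix r :: real assume r: "0 < r" "r \<le> 1"
  have "(\<lambda>y. \<lfloor>y / r\<rfloor>) ` S \<subseteq> {\<lfloor>p / r\<rfloor>}" using assms(1) by auto
  then have "mesh_count S r \<le> card {\<lfloor>p / r\<rfloor>}"
    unfolding mesh_count_def by (intro card_mono) auto
  then show "real (mesh_count S r) \<le> 1 * r powr (-0)" using r by simp
qed (use assms in auto)

lemma pack0_eq_0_if_gt_1:
  assumes "S \<subseteq> {0..1}" "1 < \<beta>"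
  shows "pack0 adm \<beta> S = 0"
proof (rule pack0_eq_0_if_mesh_count_le[OF assms(1), of 1 \<beta> 2 1])
  fix r :: real assume r: "0 < r" "r \<le> 1"
  have "real (mesh_count S r) \<le> real (card {0..\<lfloor>1/r\<rfloor>})"
    unfolding mesh_count_def using mesh_image_subset[OF assms(1) r(1)] by (intro of_nat_mono card_mono) auto
  also have "card {0..\<lfloor>1/r\<rfloor>} = nat (\<lfloor>1/r\<rfloor> + 1)" by simp
  also have "real (nat (\<lfloor>1/r\<rfloor> + 1)) \<le> 1 / r + 1"
    using r by (simp add: of_nat_nat)
  also have "\<dots> \<le> 2 * r powr (-1)"
    using r by (simp add: powr_minus_divide field_simps)
  finally show "real (mesh_count S r) \<le> 2 * r powr (-1)" .
qed (use assms in auto)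

lemma mod_eq_imp_add_le:
  fixes k k' m :: int
  assumes "k mod m = k' mod m" "k < k'"
  shows "k + m \<le> k'"
proof -
  have "m dvd k' - k" using assms(1)[symmetric] by (simp add: mod_eq_dvd_iff)
  then show ?thesis using zdvd_imp_le[of m "k' - k"] assms(2) by simp
qed

lemma exists_intervals_around_mesh_cells:
  fixes S :: "real set"
  assumes r: "0 < r"
    and good: "\<And>y. y \<in> S \<Longrightarrow> \<exists>a b. adm (a, b) \<and> a < y \<and> y < b \<and> b - a \<le> r \<and> l \<le> b - a"
  shows "\<exists>J. \<forall>k\<in>(\<lambda>y. \<lfloor>y / r\<rfloor>) ` S. adm (J k) \<and> l \<le> snd (J k) - fst (J k) \<and> snd (J k) - fst (J k) \<le> r
    \<and> {fst (J k)<..<snd (J k)} \<inter> S \<noteq> {}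
    \<and> of_int k * r - r < fst (J k) \<and> fst (J k) < snd (J k) \<and> snd (J k) < (of_int k + 2) * r"
proof (rule bchoice, rule ballI)
  fix k assume "k \<in> (\<lambda>y. \<lfloor>y / r\<rfloor>) ` S"
  then obtain y where y: "y \<in> S" "\<lfloor>y / r\<rfloor> = k" by auto
  with good obtain a b where ab: "adm (a, b)" "a < y" "y < b" "b - a \<le> r" "l \<le> b - a" by blast
  have "{a<..<b} \<inter> S \<noteq> {}" using y(1) ab(2,3) by auto
  then show "\<exists>I. adm I \<and> l \<le> snd I - fst I \<and> snd I - fst I \<le> r \<and> {fst I<..<snd I} \<inter> S \<noteq> {}
    \<and> of_int k * r - r < fst I \<and> fst I < snd I \<and> snd I < (of_int k + 2) * r"
    using ab mesh_bounds[OF r, of y] y(2) by (intro exI[of _ "(a, b)"]) (auto simp: algebra_simps)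
qed

text \<open>Intervals around points of mesh cells three apart are disjoint, so they form a packing.\<close>
lemma card_mesh_residue_le:
  assumes S: "S \<subseteq> {0..1}" and r: "0 < r" "r \<le> \<epsilon>" and "0 \<le> l" "0 \<le> \<alpha>"
    and good: "\<And>y. y \<in> S \<Longrightarrow> \<exists>a b. adm (a, b) \<and> a < y \<and> y < b \<and> b - a \<le> r \<and> l \<le> b - a"
  shows "ennreal (real (card {k \<in> (\<lambda>y. \<lfloor>y / r\<rfloor>) ` S. k mod 3 = \<rho>}) * l powr \<alpha>)
    \<le> pack_pre adm \<alpha> \<epsilon> S"
proof -
  define K where "K = {k \<in> (\<lambda>y. \<lfloor>y / r\<rfloor>) ` S. k mod 3 = \<rho>}"
  have "finite K" using finite_mesh_image[OF S r(1)] unfolding K_def by simp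
  obtain J where J: "\<forall>k\<in>(\<lambda>y. \<lfloor>y / r\<rfloor>) ` S. adm (J k) \<and> l \<le> snd (J k) - fst (J k) \<and> snd (J k) - fst (J k) \<le> r
    \<and> {fst (J k)<..<snd (J k)} \<inter> S \<noteq> {}
    \<and> of_int k * r - r < fst (J k) \<and> fst (J k) < snd (J k) \<and> snd (J k) < (of_int k + 2) * r"
    using exists_intervals_around_mesh_cells[OF r(1) good] by blast
  have sep: "snd (J k) \<le> fst (J k')" if "k \<in> K" "k' \<in> K" "k < k'" for k k'
  proof -
    have "k + 3 \<le> k'" using mod_eq_imp_add_le[of k 3 k'] that unfolding K_def by auto
    then have "(of_int k + 3) * r \<le> of_int k' * r"
      using r(1) by (intro mult_right_mono) (simp_all flip: of_int_le_iff)
    moreover have "snd (J k) < (of_int k + 2) * r" "of_int k' * r - r < fst (J k')"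
      using J that unfolding K_def by auto
    ultimately show ?thesis by (simp only: distrib_right)
  qed
  have J_K: "adm (J k) \<and> fst (J k) < snd (J k) \<and> snd (J k) - fst (J k) \<le> \<epsilon> \<and> l \<le> snd (J k) - fst (J k)
      \<and> {fst (J k)<..<snd (J k)} \<inter> S \<noteq> {}" if "k \<in> K" for k
  proof -
    have "k \<in> (\<lambda>y. \<lfloor>y / r\<rfloor>) ` S" using that unfolding K_def by auto
    then show ?thesis using J r(2) by auto
  qed
  have disjoint: "{fst (J k)<..<snd (J k)} \<inter> {fst (J k')<..<snd (J k')} = {}"
    if "k \<in> K" "k' \<in> K" "k \<noteq> k'" for k k'
    using sep[OF that(1,2)] sep[OF that(2,1)] that(3) by (cases "k < k'") auto
  have "inj_on J K"
  proof (rule inj_onI, rule ccontr)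
    fix k k' assume "k \<in> K" "k' \<in> K" "J k = J k'" "k \<noteq> k'"
    then show False using disjoint[of k k'] J_K[of k] by auto
  qed
  have "is_packing adm \<epsilon> S (J ` K)"
    unfolding is_packing_def using \<open>finite K\<close> J_K disjoint by (auto simp: countable_finite)
  then have "ennreal (\<Sum>I\<in>J ` K. (snd I - fst I) powr \<alpha>) \<le> pack_pre adm \<alpha> \<epsilon> S"
    using \<open>finite K\<close> by (intro sum_powr_le_pack_pre) auto
  moreover have "real (card K) * l powr \<alpha> \<le> (\<Sum>I\<in>J ` K. (snd I - fst I) powr \<alpha>)"
  proof -
    have "real (card K) * l powr \<alpha> \<le> (\<Sum>k\<in>K. (snd (J k) - fst (J k)) powr \<alpha>)"
      using J_K \<open>0 \<le> l\<close> \<open>0 \<le> \<alpha>\<close> by (simp add: sum_bounded_below powr_mono2 mult.commute)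
    then show ?thesis using \<open>inj_on J K\<close> by (simp add: sum.reindex)
  qed
  ultimately show ?thesis unfolding K_def by (meson ennreal_leI order_trans)
qed

lemma mesh_count_le_if_pack0_finite:
  assumes S: "S \<subseteq> {0..1}" and "0 \<le> \<alpha>" "0 < \<kappa>" "0 < r0"
    and good: "\<And>y r. y \<in> S \<Longrightarrow> 0 < r \<Longrightarrow> r < r0 \<Longrightarrow>
      \<exists>a b. adm (a, b) \<and> a < y \<and> y < b \<and> b - a \<le> r \<and> \<kappa> * r powr \<gamma> \<le> b - a"
    and "pack0 adm \<alpha> S < \<top>"
  obtains C r1 where "0 \<le> C" "0 < r1"
    "\<And>r. 0 < r \<Longrightarrow> r \<le> r1 \<Longrightarrow> real (mesh_count S r) \<le> C * r powr (-(\<alpha> * \<gamma>))"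
proof -
  obtain \<epsilon> where \<epsilon>: "0 < \<epsilon>" "pack_pre adm \<alpha> \<epsilon> S < \<top>"
    using \<open>pack0 adm \<alpha> S < \<top>\<close> unfolding pack0_def by (auto simp: INF_less_iff)
  define K where "K = enn2real (pack_pre adm \<alpha> \<epsilon> S)"
  have K: "pack_pre adm \<alpha> \<epsilon> S = ennreal K" "0 \<le> K" unfolding K_def using \<epsilon>(2) by auto
  show ?thesis
  proof (rule that[of "3 * K / \<kappa> powr \<alpha>" "min \<epsilon> (r0 / 2)"])
    fix r assume r: "0 < r" "r \<le> min \<epsilon> (r0 / 2)"
    define FS where "FS = (\<lambda>y. \<lfloor>y / r\<rfloor>) ` S"
    define l where "l = \<kappa> * r powr \<gamma>"
    have l: "0 < l powr \<alpha>" unfolding l_def using \<open>0 < \<kappa>\<close> r by simp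
    have residue: "real (card {k \<in> FS. k mod 3 = \<rho>}) \<le> K / l powr \<alpha>" for \<rho>
    proof -
      have "ennreal (real (card {k \<in> FS. k mod 3 = \<rho>}) * l powr \<alpha>) \<le> ennreal K"
        unfolding FS_def K(1)[symmetric] l_def
        using r \<open>0 < \<kappa>\<close> \<open>0 < r0\<close> \<open>0 \<le> \<alpha>\<close> good
        by (intro card_mesh_residue_le[OF S r(1)]) auto
      then show ?thesis using K(2) l by (simp add: ennreal_le_iff pos_le_divide_eq)
    qed
    have "card FS = card (\<Union>\<rho>\<in>{0, 1, 2::int}. {k \<in> FS. k mod 3 = \<rho>})"
      by (rule arg_cong[where f = card]) auto
    also have "\<dots> \<le> (\<Sum>\<rho>\<in>{0, 1, 2::int}. card {k \<in> FS. k mod 3 = \<rho>})"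
      by (rule card_UN_le) simp
    finally have "real (mesh_count S r) \<le> real (\<Sum>\<rho>\<in>{0, 1, 2::int}. card {k \<in> FS. k mod 3 = \<rho>})"
      unfolding mesh_count_def FS_def[symmetric] by (rule of_nat_mono)
    also have "\<dots> \<le> (\<Sum>\<rho>\<in>{0, 1, 2::int}. K / l powr \<alpha>)"
      unfolding of_nat_sum by (rule sum_mono) (rule residue)
    also have "\<dots> = 3 * K / (\<kappa> powr \<alpha> * r powr (\<gamma> * \<alpha>))"
      unfolding l_def using \<open>0 < \<kappa>\<close> r by (simp add: powr_mult powr_powr)
    also have "\<dots> = 3 * K / \<kappa> powr \<alpha> * r powr (-(\<alpha> * \<gamma>))"
      by (simp add: powr_minus divide_inverse mult.commute)
    finally show "real (mesh_count S r) \<le> 3 * K / \<kappa> powr \<alpha> * r powr (-(\<alpha> * \<gamma>))" .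
  qed (use K(2) \<epsilon>(1) \<open>0 < r0\<close> in auto)
qed

text \<open>Restricting the admissible intervals can only lower the packing measures, so only the
  converse comparison has to be supplied.\<close>
lemma pack_dim_eq_unc_if:
  assumes E: "E \<subseteq> {0..1}"
    and transfer: "\<And>\<alpha> \<beta>. 0 \<le> \<alpha> \<Longrightarrow> \<alpha> < \<beta> \<Longrightarrow> pack_measure adm \<alpha> E = 0 \<Longrightarrow>
      pack_measure unc_adm \<beta> E = 0"
  shows "pack_dim adm E = pack_dim unc_adm E"
proof -
  define A where "A = {\<alpha>. \<alpha> \<ge> 0 \<and> pack_measure adm \<alpha> E = 0}"
  define U where "U = {\<alpha>. \<alpha> \<ge> 0 \<and> pack_measure unc_adm \<alpha> E = 0}"
  have "U \<subseteq> A"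
  proof
    fix \<alpha> assume "\<alpha> \<in> U"
    then have "0 \<le> \<alpha>" "pack_measure unc_adm \<alpha> E = 0" unfolding U_def by auto
    moreover have "pack_measure adm \<alpha> E \<le> pack_measure unc_adm \<alpha> E"
      by (rule pack_measure_mono_adm) (simp add: unc_adm_def)
    ultimately have "pack_measure adm \<alpha> E \<le> 0" by simp
    then show "\<alpha> \<in> A" using \<open>0 \<le> \<alpha>\<close> unfolding A_def by simp
  qed
  moreover have "pack_measure unc_adm 2 E = 0"
    by (rule pack_measure_eq_0_if_countable_cover[of "{E}"]) (use pack0_eq_0_if_gt_1[OF E] in auto)
  then have "2 \<in> U" unfolding U_def by simp
  moreover have bdd: "bdd_below A" "bdd_below U" unfolding A_def U_def by (auto intro: bdd_belowI[of _ 0])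
  ultimately have "Inf A \<le> Inf U" by (intro cInf_superset_mono) auto
  moreover have "Inf U \<le> Inf A"
  proof (rule cInf_greatest)
    show "A \<noteq> {}" using \<open>U \<subseteq> A\<close> \<open>2 \<in> U\<close> by blast
  next
    fix \<alpha> assume "\<alpha> \<in> A"
    then have shift: "\<alpha> + t \<in> U" if "0 < t" for t
      using transfer[of \<alpha> "\<alpha> + t"] that unfolding A_def U_def by simp
    show "Inf U \<le> \<alpha>" by (rule field_le_epsilon) (rule cInf_lower[OF shift bdd(2)])
  qed
  ultimately have "Inf A = Inf U" by (rule antisym)
  then show ?thesis unfolding pack_dim_def A_def U_def .
qed

lemma exists_gt_1_mult_square_less:
  fixes \<alpha> \<beta> :: real
  assumes "0 \<le> \<alpha>" "\<alpha> < \<beta>"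
  shows "\<exists>t>1. \<alpha> * (t * t) < \<beta>"
proof (cases "\<alpha> = 0")
  case True
  then show ?thesis using assms by (intro exI[of _ 2]) auto
next
  case False
  then have "0 < \<alpha>" using assms by simp
  define t where "t = sqrt ((\<alpha> + \<beta>) / (2 * \<alpha>))"
  have "1 < (\<alpha> + \<beta>) / (2 * \<alpha>)" using \<open>0 < \<alpha>\<close> assms by simp
  then have "1 < t" "t * t = (\<alpha> + \<beta>) / (2 * \<alpha>)" unfolding t_def using \<open>0 < \<alpha>\<close> assms by simp_all
  moreover have "\<alpha> * ((\<alpha> + \<beta>) / (2 * \<alpha>)) < \<beta>" using \<open>0 < \<alpha>\<close> assms by simp
  ultimately show ?thesis by auto
qed

lemma powr_bounds_if_log_ratio_bounds:
  fixes L D t :: real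
  assumes L: "0 < L" "L < 1" and "0 \<le> D"
    and ratio: "1 / t < ln D / ln L" "ln D / ln L < t"
  shows "L powr t \<le> D \<and> D \<le> L powr (1 / t)"
proof -
  have "0 < D"
  proof (rule ccontr)
    assume "\<not> 0 < D"
    then have "D = 0" using \<open>0 \<le> D\<close> by simp
    then have "1 / t < 0" "0 < t" using ratio by simp_all
    then show False by (simp add: divide_less_0_iff)
  qed
  have lnL: "ln L < 0" using L by simp
  have lower: "t * ln L < ln D" using ratio(2) lnL by (simp add: divide_less_eq mult.commute)
  have upper: "ln D < 1 / t * ln L" using ratio(1) lnL by (simp add: less_divide_eq mult.commute)
  have "L powr t = exp (t * ln L)" using L by (simp add: powr_def mult.commute)
  also have "\<dots> < D" using lower \<open>0 < D\<close> by (metis exp_less_cancel_iff exp_ln)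
  finally have "L powr t < D" .
  moreover have "D < L powr (1 / t)"
  proof -
    have "D < exp (1 / t * ln L)" using upper \<open>0 < D\<close> by (metis exp_less_cancel_iff exp_ln)
    also have "\<dots> = L powr (1 / t)" using L by (simp add: powr_def mult.commute)
    finally show ?thesis .
  qed
  ultimately show ?thesis by simp
qed

lemma exists_last_true: "P 0 \<Longrightarrow> \<not> P n \<Longrightarrow> \<exists>i<n. P i \<and> \<not> P (Suc i)"
  by (induction n) (auto intro: less_SucI)

lemma prod_le_power_card:
  fixes f :: "'a \<Rightarrow> real"
  assumes "finite A" and f: "\<And>x. x \<in> A \<Longrightarrow> 0 \<le> f x \<and> f x \<le> 1"
    and small: "\<And>x. x \<in> A \<Longrightarrow> x \<notin> B \<Longrightarrow> f x \<le> \<theta>"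
  shows "prod f A \<le> \<theta> ^ card (A - B)"
proof -
  have "prod f A = prod f (A \<inter> B) * prod f (A - B)" using \<open>finite A\<close> by (rule prod.Int_Diff)
  also have "\<dots> \<le> 1 * prod f (A - B)"
    using f by (intro mult_right_mono prod_le_1 prod_nonneg) auto
  also have "\<dots> \<le> 1 * (\<Prod>x\<in>A - B. \<theta>)" using f small by (intro mult_left_mono prod_mono) auto
  finally show ?thesis by simp
qed

text \<open>If the products of \<open>p'\<close> stay above \<open>a > 0\<close>, then \<open>p j > \<theta>\<close>, which forces
  \<open>p' j < 1 - \<theta>\<close>, happens for fewer than \<open>K\<close> indices.\<close>
lemma prod_le_power_if_prod_complement_ge:
  fixes p p' :: "nat \<Rightarrow> real"
  assumes p: "\<And>j. 0 \<le> p j" "\<And>j. 0 \<le> p' j" "\<And>j. p j + p' j \<le> 1"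
    and "0 < a" and bound: "\<And>n. a \<le> (\<Prod>j<n. p' j)" and \<theta>: "0 < \<theta>" "\<theta> < 1"
  shows "\<exists>K. \<forall>n. (\<Prod>j<n. p j) \<le> \<theta> ^ (n - K)"
proof -
  obtain K where K: "(1 - \<theta>) ^ K < a" using real_arch_pow_inv[OF \<open>0 < a\<close>, of "1 - \<theta>"] \<theta> by auto
  define B where "B = {j. \<theta> < p j}"
  have p_le: "p j \<le> 1" "p' j \<le> 1" "\<theta> < p j \<Longrightarrow> p' j \<le> 1 - \<theta>" for j
    using p(1,2)[of j] p(3)[of j] by linarith+
  have "(\<Prod>j<n. p j) \<le> \<theta> ^ (n - K)" for n
  proof -
    have "a \<le> (1 - \<theta>) ^ card ({..<n} - (- B))"
      using bound[of n] p(2) p_le(2,3) by (intro order_trans[OF _ prod_le_power_card]) (auto simp: B_def)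
    then have "a \<le> (1 - \<theta>) ^ card ({..<n} \<inter> B)" by (simp add: Diff_Compl)
    then have "card ({..<n} \<inter> B) < K"
    proof (rule contrapos_pp)
      assume "\<not> card ({..<n} \<inter> B) < K"
      then have "(1 - \<theta>) ^ card ({..<n} \<inter> B) \<le> (1 - \<theta>) ^ K" using \<theta> by (intro power_decreasing) auto
      then show "\<not> a \<le> (1 - \<theta>) ^ card ({..<n} \<inter> B)" using K by simp
    qed
    moreover have "card ({..<n} - B) = n - card ({..<n} \<inter> B)"
      using card_Int_Diff[of "{..<n}" B] by simp
    ultimately have "n - K \<le> card ({..<n} - B)" by simp
    have "(\<Prod>j<n. p j) \<le> \<theta> ^ card ({..<n} - B)"
      using p(1) p_le(1) unfolding B_def by (intro prod_le_power_card) (auto simp: not_less)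
    also have "\<dots> \<le> \<theta> ^ (n - K)" using \<open>n - K \<le> _\<close> \<theta> by (intro power_decreasing) auto
    finally show ?thesis .
  qed
  then show ?thesis by blast
qed

section \<open>Cylinders of a Q-expansion\<close>

abbreviation cyl_right :: "(nat \<Rightarrow> nat \<Rightarrow> real) \<Rightarrow> (nat \<Rightarrow> nat) \<Rightarrow> nat \<Rightarrow> real" where
  "cyl_right q c n \<equiv> cyl_left q c n + cyl_len q c n"

lemma cyl_left_0 [simp]: "cyl_left q c 0 = 0"
  unfolding cyl_left_def by simp

lemma cyl_len_0 [simp]: "cyl_len q c 0 = 1"
  unfolding cyl_len_def by simp

lemma cyl_len_Suc: "cyl_len q c (Suc n) = cyl_len q c n * q (c n) n"
  unfolding cyl_len_def by simp

lemma cyl_left_Suc: "cyl_left q c (Suc n) = cyl_left q c n + Qbeta q (c n) n * cyl_len q c n"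
  unfolding cyl_left_def cyl_len_def by simp

lemma Qbeta_0 [simp]: "Qbeta q 0 k = 0"
  unfolding Qbeta_def by simp

lemma Qbeta_Suc: "Qbeta q (Suc i) k = Qbeta q i k + q i k"
  unfolding Qbeta_def by simp

text \<open>\<open>P n l L\<close> is an invariant of the rank-\<open>n\<close> cylinder with left end \<open>l\<close> and length \<open>L\<close>;
  digits are chosen one at a time so as to preserve it.\<close>
lemma exists_digit_seq:
  assumes start: "P 0 0 1"
    and step: "\<And>n l L. P n l L \<Longrightarrow> \<exists>i<N n. P (Suc n) (l + Qbeta q i n * L) (L * q i n)"
  shows "\<exists>c. digit_seq N c \<and> (\<forall>n. P n (cyl_left q c n) (cyl_len q c n))"
proof -
  obtain digit where digit: "\<And>n l L. P n l L \<Longrightarrow>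
      digit n l L < N n \<and> P (Suc n) (l + Qbeta q (digit n l L) n * L) (L * q (digit n l L) n)"
    using step by metis
  define st where "st = rec_nat (0, 1)
    (\<lambda>n (l, L). (l + Qbeta q (digit n l L) n * L, L * q (digit n l L) n))"
  define c where "c n = digit n (fst (st n)) (snd (st n))" for n
  have st_Suc: "st (Suc n) = (fst (st n) + Qbeta q (c n) n * snd (st n), snd (st n) * q (c n) n)" for n
    unfolding st_def c_def by (simp add: case_prod_beta)
  have P_st: "P n (fst (st n)) (snd (st n))" for n
  proof (induction n)
    case (Suc n)
    then show ?case using digit[OF Suc] unfolding st_Suc c_def by simp
  qed (simp add: st_def start)
  have "st n = (cyl_left q c n, cyl_len q c n)" for n
  proof (induction n)
    case (Suc n)
    then show ?case by (simp add: st_Suc cyl_left_Suc cyl_len_Suc)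
  qed (simp add: st_def)
  moreover have "digit_seq N c" unfolding digit_seq_def c_def using digit P_st by blast
  ultimately show ?thesis using P_st by (metis fst_conv snd_conv)
qed

definition cyl_ends :: "(nat \<Rightarrow> nat \<Rightarrow> real) \<Rightarrow> real set" where
  "cyl_ends q = {cyl_left q c n | c n. True} \<union> {cyl_right q c n | c n. True}"

lemma countable_cyl_ends: "countable (cyl_ends q)"
proof -
  have prefix: "cyl_left q c n = cyl_left q ((!) (map c [0..<n])) n"
    "cyl_len q c n = cyl_len q ((!) (map c [0..<n])) n" for c n
    unfolding cyl_left_def cyl_len_def by (auto intro!: sum.cong prod.cong)
  have "cyl_ends q \<subseteq> (\<lambda>(xs, n). cyl_left q ((!) xs) n) ` UNIV \<union> (\<lambda>(xs, n). cyl_right q ((!) xs) n) ` UNIV"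
  proof
    fix y assume "y \<in> cyl_ends q"
    then obtain c n where "y = cyl_left q c n \<or> y = cyl_right q c n" unfolding cyl_ends_def by blast
    then show "y \<in> (\<lambda>(xs, n). cyl_left q ((!) xs) n) ` UNIV \<union> (\<lambda>(xs, n). cyl_right q ((!) xs) n) ` UNIV"
      using prefix[of c n] by (auto intro!: image_eqI[of _ _ "(map c [0..<n], n)"])
  qed
  then show ?thesis by (rule countable_subset) simp
qed

locale Q_expansion =
  fixes N :: "nat \<Rightarrow> nat" and q :: "nat \<Rightarrow> nat \<Rightarrow> real" and \<delta> :: real
  assumes Qexp: "Qexp N q" and \<delta>_pos: "0 < \<delta>" and q_ge_\<delta>: "\<And>k i. i < N k \<Longrightarrow> \<delta> \<le> q i k"
begin

lemma N_ge_2: "2 \<le> N k"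
  using Qexp unfolding Qexp_def by auto

lemma q_pos: "i < N k \<Longrightarrow> 0 < q i k"
  using Qexp unfolding Qexp_def by auto

lemma Qbeta_N: "Qbeta q (N k) k = 1"
  using Qexp unfolding Qexp_def Qbeta_def by auto

lemma Qbeta_mono: "i \<le> j \<Longrightarrow> j \<le> N k \<Longrightarrow> Qbeta q i k \<le> Qbeta q j k"
  unfolding Qbeta_def using q_pos by (intro sum_mono2) (auto intro: less_imp_le)

lemma Qbeta_nonneg: "i \<le> N k \<Longrightarrow> 0 \<le> Qbeta q i k"
  using Qbeta_mono[of 0 i k] by simp

lemma Qbeta_Suc_le_1: "i < N k \<Longrightarrow> Qbeta q (Suc i) k \<le> 1"
  using Qbeta_mono[of "Suc i" "N k" k] Qbeta_N by simp

lemma q_le: "i < N k \<Longrightarrow> q i k \<le> 1 - \<delta>"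
proof -
  assume i: "i < N k"
  define j where "j = (if i = 0 then 1 else 0 :: nat)"
  have j: "j < N k" "j \<noteq> i" using N_ge_2[of k] i unfolding j_def by auto
  have "q i k + q j k = (\<Sum>l\<in>{i, j}. q l k)" using j by simp
  also have "\<dots> \<le> Qbeta q (N k) k"
    unfolding Qbeta_def using i j q_pos by (intro sum_mono2) (auto intro: less_imp_le)
  finally show ?thesis using Qbeta_N q_ge_\<delta>[OF j(1)] by simp
qed

lemma \<delta>_le_half: "\<delta> \<le> 1/2"
  using q_ge_\<delta>[of 0 0] q_le[of 0 0] N_ge_2[of 0] by simp

lemma exists_digits_between:
  assumes "R 0" "\<not> R 1"
  shows "\<exists>c. digit_seq N c \<and> (\<forall>n. R (cyl_left q c n) \<and> \<not> R (cyl_right q c n))"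
proof -
  have "\<exists>c. digit_seq N c \<and> (\<forall>n. (\<lambda>n l L. R l \<and> \<not> R (l + L)) n (cyl_left q c n) (cyl_len q c n))"
  proof (rule exists_digit_seq)
    fix n l L assume "R l \<and> \<not> R (l + L)"
    then obtain i where "i < N n" "R (l + Qbeta q i n * L)" "\<not> R (l + Qbeta q (Suc i) n * L)"
      using exists_last_true[of "\<lambda>i. R (l + Qbeta q i n * L)" "N n"] by (auto simp: Qbeta_N)
    then show "\<exists>i<N n. R (l + Qbeta q i n * L) \<and> \<not> R (l + Qbeta q i n * L + L * q i n)"
      by (auto simp: Qbeta_Suc algebra_simps)
  qed (use assms in simp)
  then show ?thesis by simp
qed

lemma exists_digits_closed:
  assumes "0 \<le> x" "x \<le> 1"
  shows "\<exists>c. digit_seq N c \<and> (\<forall>n. cyl_left q c n \<le> x \<and> x \<le> cyl_right q c n)"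
proof (cases "x = 1")
  case True
  then obtain c where "digit_seq N c" "\<forall>n. cyl_left q c n < x \<and> \<not> cyl_right q c n < x"
    using exists_digits_between[of "\<lambda>y. y < x"] by auto
  then show ?thesis by (intro exI[of _ c]) (auto intro: less_imp_le simp: not_less)
next
  case False
  then obtain c where "digit_seq N c" "\<forall>n. cyl_left q c n \<le> x \<and> \<not> cyl_right q c n \<le> x"
    using exists_digits_between[of "\<lambda>y. y \<le> x"] assms by auto
  then show ?thesis by (intro exI[of _ c]) (auto intro: less_imp_le simp: not_le)
qed

context
  fixes c assumes c: "digit_seq N c"
begin

lemma digit_less: "c n < N n"
  using c unfolding digit_seq_def by auto

lemma cyl_len_pos: "0 < cyl_len q c n"
  by (induction n) (simp_all add: cyl_len_Suc q_pos[OF digit_less])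

lemma cyl_len_ge: "\<delta> ^ n \<le> cyl_len q c n"
proof (induction n)
  case (Suc n)
  have "\<delta> ^ n * \<delta> \<le> cyl_len q c n * q (c n) n"
    using Suc q_ge_\<delta>[OF digit_less] \<delta>_pos cyl_len_pos[of n] by (intro mult_mono) auto
  then show ?case by (simp add: cyl_len_Suc mult.commute)
qed simp

lemma cyl_len_le: "cyl_len q c n \<le> (1 - \<delta>) ^ n"
proof (induction n)
  case (Suc n)
  have "cyl_len q c n * q (c n) n \<le> (1 - \<delta>) ^ n * (1 - \<delta>)"
    using Suc q_le[OF digit_less] q_pos[OF digit_less] \<delta>_le_half
    by (intro mult_mono) (auto intro: less_imp_le)
  then show ?case by (simp add: cyl_len_Suc mult.commute)
qed simp

lemma cyl_len_Suc_ge: "\<delta> * cyl_len q c n \<le> cyl_len q c (Suc n)"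
  using q_ge_\<delta>[OF digit_less, of n] cyl_len_pos[of n] by (simp add: cyl_len_Suc mult.commute)

lemma cyl_len_tendsto_0: "(\<lambda>n. cyl_len q c n) \<longlonglongrightarrow> 0"
proof (rule tendsto_sandwich[OF _ _ tendsto_const LIMSEQ_power_zero[of "1 - \<delta>"]])
  show "eventually (\<lambda>n. 0 \<le> cyl_len q c n) sequentially" using cyl_len_pos by (simp add: less_imp_le)
  show "eventually (\<lambda>n. cyl_len q c n \<le> (1 - \<delta>) ^ n) sequentially" using cyl_len_le by simp
  show "norm (1 - \<delta>) < 1" using \<delta>_pos \<delta>_le_half by simp
qed

lemma cyl_left_mono: "m \<le> n \<Longrightarrow> cyl_left q c m \<le> cyl_left q c n"
  by (rule lift_Suc_mono_le[of "cyl_left q c"])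
    (use Qbeta_nonneg[OF less_imp_le[OF digit_less]] cyl_len_pos in
      \<open>auto simp: cyl_left_Suc intro!: mult_nonneg_nonneg less_imp_le[OF cyl_len_pos]\<close>)

lemma cyl_right_Suc: "cyl_right q c (Suc n) = cyl_left q c n + Qbeta q (Suc (c n)) n * cyl_len q c n"
  by (simp add: cyl_left_Suc cyl_len_Suc Qbeta_Suc algebra_simps)

lemma cyl_right_antimono: "m \<le> n \<Longrightarrow> cyl_right q c n \<le> cyl_right q c m"
  by (rule lift_Suc_antimono_le[of "cyl_right q c"])
    (use Qbeta_Suc_le_1[OF digit_less] cyl_len_pos in \<open>auto simp: cyl_right_Suc mult_le_cancel_right1\<close>)

lemma cyl_right_le_1: "cyl_right q c n \<le> 1"
  using cyl_right_antimono[of 0 n] by simp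

lemma cyl_right_Suc_less: "Suc (c n) < N n \<Longrightarrow> cyl_right q c (Suc n) < cyl_right q c n"
  using Qbeta_Suc_le_1[of "Suc (c n)" n] q_pos[of "Suc (c n)" n] cyl_len_pos[of n]
  by (simp add: cyl_right_Suc Qbeta_Suc mult_less_cancel_right1)

end

lemma cyl_left_le_cyl_right:
  assumes c: "digit_seq N c"
  shows "cyl_left q c m \<le> cyl_right q c n"
proof (cases "m \<le> n")
  case True
  then show ?thesis using cyl_left_mono[OF c True] cyl_len_pos[OF c, of n] by simp
next
  case False
  then show ?thesis using cyl_right_antimono[OF c, of n m] cyl_len_pos[OF c, of m] by simp
qed

lemma Qseries_bounds:
  assumes c: "digit_seq N c"
  shows "cyl_left q c n \<le> (\<Sum>k. Qbeta q (c k) k * (\<Prod>j<k. q (c j) j))"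
    "(\<Sum>k. Qbeta q (c k) k * (\<Prod>j<k. q (c j) j)) \<le> cyl_right q c n"
proof -
  define f where "f k = Qbeta q (c k) k * (\<Prod>j<k. q (c j) j)" for k
  have partial: "sum f {..<m} = cyl_left q c m" for m unfolding f_def cyl_left_def by simp
  have f: "0 \<le> f k" for k
    unfolding f_def using Qbeta_nonneg[OF less_imp_le[OF digit_less[OF c]]] q_pos[OF digit_less[OF c]]
    by (intro mult_nonneg_nonneg prod_nonneg) (auto intro: less_imp_le)
  have "summable f"
    using cyl_left_le_cyl_right[OF c, of _ 0] by (intro summableI_nonneg_bounded[of f 1]) (simp_all add: f partial)
  then show "cyl_left q c n \<le> (\<Sum>k. Qbeta q (c k) k * (\<Prod>j<k. q (c j) j))"
    "(\<Sum>k. Qbeta q (c k) k * (\<Prod>j<k. q (c j) j)) \<le> cyl_right q c n"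
    using sum_le_suminf[of f "{..<n}"] suminf_le_const[of f] cyl_left_le_cyl_right[OF c]
    unfolding f_def[symmetric] by (simp_all add: f partial)
qed

lemma cyl_len_zeros_le_cyl_left:
  assumes c: "digit_seq N c"
  shows "(\<exists>j<n. c j \<noteq> 0) \<Longrightarrow> cyl_len q (\<lambda>_. 0) n \<le> cyl_left q c n"
proof (induction n)
  case (Suc n)
  have q0: "0 < q 0 k" "q 0 k \<le> 1" for k using q_pos[of 0 k] q_le[of 0 k] N_ge_2[of k] \<delta>_pos by auto
  show ?case
  proof (cases "\<exists>j<n. c j \<noteq> 0")
    case True
    have "cyl_len q (\<lambda>_. 0) (Suc n) \<le> cyl_len q (\<lambda>_. 0) n"
      using q0 by (simp add: cyl_len_Suc cyl_len_def mult_left_le prod_nonneg less_imp_le)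
    also have "\<dots> \<le> cyl_left q c n" using Suc.IH True by blast
    also have "\<dots> \<le> cyl_left q c (Suc n)" using cyl_left_mono[OF c] by simp
    finally show ?thesis .
  next
    case False
    then have zeros: "cyl_len q (\<lambda>_. 0) n = cyl_len q c n" unfolding cyl_len_def by (intro prod.cong) auto
    have "c n \<noteq> 0" using False Suc.prems less_Suc_eq by auto
    then have "q 0 n \<le> Qbeta q (c n) n"
      using Qbeta_mono[of 1 "c n" n] digit_less[OF c, of n] by (simp add: Qbeta_Suc)
    then have "cyl_len q (\<lambda>_. 0) (Suc n) \<le> Qbeta q (c n) n * cyl_len q c n"
      using cyl_len_pos[OF c, of n] by (simp add: cyl_len_Suc zeros mult.commute)
    also have "\<dots> \<le> cyl_left q c (Suc n)"
      using cyl_left_mono[OF c, of 0 n] by (simp add: cyl_left_Suc)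
    finally show ?thesis .
  qed
qed simp

end

section \<open>The distribution function\<close>

locale Q_regular_dist = Q_expansion +
  fixes F :: "real \<Rightarrow> real"
  assumes F_mono: "mono F"
    and F_log_ratio: "\<forall>x\<in>{0..1}. \<forall>c. digit_seq N c \<and> (\<forall>n. x \<in> cylinder q n c) \<longrightarrow>
        (\<lambda>n. ln (F (cyl_left q c n + cyl_len q c n) - F (cyl_left q c n)) / ln (cyl_len q c n))
          \<longlonglongrightarrow> 1"
begin

abbreviation F_len :: "(nat \<Rightarrow> nat) \<Rightarrow> nat \<Rightarrow> real" where
  "F_len c n \<equiv> F (cyl_right q c n) - F (cyl_left q c n)"

lemma F_len_nonneg: "digit_seq N c \<Longrightarrow> 0 \<le> F_len c n"
  using F_mono cyl_len_pos[of c n] unfolding mono_def by simp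

lemma F_len_antimono: "digit_seq N c \<Longrightarrow> k \<le> m \<Longrightarrow> F_len c m \<le> F_len c k"
  using F_mono cyl_left_mono[of c k m] cyl_right_antimono[of c k m] unfolding mono_def
  by (metis diff_mono)

lemma eventually_F_len_powr_bounds:
  assumes c: "digit_seq N c" and x: "0 \<le> x" "x \<le> 1"
    and x_in: "\<And>n. cyl_left q c n \<le> x \<and> x \<le> cyl_right q c n" and "1 < t"
  shows "eventually (\<lambda>n. cyl_len q c n powr t \<le> F_len c n \<and> F_len c n \<le> cyl_len q c n powr (1 / t))
    sequentially"
proof -
  have ratio: "(\<lambda>n. ln (F_len c n) / ln (cyl_len q c n)) \<longlonglongrightarrow> 1"
    using F_log_ratio x c x_in unfolding cylinder_def by auto
  have "eventually (\<lambda>n. 1 / t < ln (F_len c n) / ln (cyl_len q c n)) sequentially"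
    using \<open>1 < t\<close> by (intro order_tendstoD(1)[OF ratio]) simp
  moreover have "eventually (\<lambda>n. ln (F_len c n) / ln (cyl_len q c n) < t) sequentially"
    using \<open>1 < t\<close> by (rule order_tendstoD(2)[OF ratio])
  moreover have "eventually (\<lambda>n. cyl_len q c n < 1) sequentially"
    by (rule order_tendstoD(2)[OF cyl_len_tendsto_0[OF c]]) simp
  ultimately show ?thesis
  proof eventually_elim
    case (elim n)
    show ?case
      by (rule powr_bounds_if_log_ratio_bounds[OF cyl_len_pos[OF c] elim(3) F_len_nonneg[OF c] elim(1,2)])
  qed
qed

lemma exists_F_len_less:
  assumes c: "digit_seq N c" and x: "0 \<le> x" "x \<le> 1"
    and x_in: "\<And>n. cyl_left q c n \<le> x \<and> x \<le> cyl_right q c n" and "0 < e"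
  obtains n where "F_len c n < e"
proof -
  have two: "1 < (2::real)" by simp
  have "(\<lambda>n. cyl_len q c n powr (1 / 2)) \<longlonglongrightarrow> 0 powr (1 / 2)"
    using cyl_len_tendsto_0[OF c]
    by (intro tendsto_powr') (auto intro!: always_eventually less_imp_le cyl_len_pos[OF c])
  then have "eventually (\<lambda>n. cyl_len q c n powr (1 / 2) < e) sequentially"
    using \<open>0 < e\<close> by (intro order_tendstoD(2)) auto
  moreover from eventually_F_len_powr_bounds[OF c x x_in two]
  have "eventually (\<lambda>n. F_len c n \<le> cyl_len q c n powr (1 / 2)) sequentially"
    by (rule eventually_mono) (rule conjunct2)
  ultimately have "eventually (\<lambda>n. F_len c n < e) sequentially"
    by eventually_elim (rule le_less_trans)
  then obtain m where "\<forall>n\<ge>m. F_len c n < e" unfolding eventually_sequentially ..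
  then show ?thesis using that by blast
qed

lemma F_bracket:
  assumes "0 \<le> x" "x \<le> 1" "0 < e"
  obtains a b where "a \<le> x" "x \<le> b" "0 < x \<Longrightarrow> a < x" "x < 1 \<Longrightarrow> x < b" "F b - F a < e"
proof -
  obtain b where b: "x \<le> b" "x < 1 \<Longrightarrow> x < b" "F b - F x < e / 2"
  proof (cases "x < 1")
    case True
    then obtain c where c: "digit_seq N c" "\<forall>n. cyl_left q c n \<le> x \<and> \<not> cyl_right q c n \<le> x"
      using exists_digits_between[of "\<lambda>y. y \<le> x"] assms by auto
    then have x_in: "cyl_left q c n \<le> x \<and> x \<le> cyl_right q c n" for n
      by (auto simp: not_le intro: less_imp_le)
    obtain n where n: "F_len c n < e / 2"
      using exists_F_len_less[OF c(1) assms(1,2) x_in, where e = "e / 2"] \<open>0 < e\<close> by auto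
    have "F (cyl_left q c n) \<le> F x" using x_in F_mono by (simp add: monoD)
    then show ?thesis using c(2) x_in n by (intro that[of "cyl_right q c n"]) (auto simp: not_le)
  qed (use \<open>0 < e\<close> that[of x] in auto)
  obtain a where a: "a \<le> x" "0 < x \<Longrightarrow> a < x" "F x - F a < e / 2"
  proof (cases "0 < x")
    case True
    then obtain c where c: "digit_seq N c" "\<forall>n. cyl_left q c n < x \<and> \<not> cyl_right q c n < x"
      using exists_digits_between[of "\<lambda>y. y < x"] assms by auto
    then have x_in: "cyl_left q c n \<le> x \<and> x \<le> cyl_right q c n" for n
      by (auto simp: not_less intro: less_imp_le)
    obtain n where n: "F_len c n < e / 2"
      using exists_F_len_less[OF c(1) assms(1,2) x_in, where e = "e / 2"] \<open>0 < e\<close> by auto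
    have "F x \<le> F (cyl_right q c n)" using x_in F_mono by (simp add: monoD)
    then show ?thesis using c(2) x_in n by (intro that[of "cyl_left q c n"]) auto
  qed (use \<open>0 < e\<close> that[of x] in auto)
  from a b show ?thesis by (intro that[of a b]) auto
qed

lemma continuous_on_F: "continuous_on {0..1} F"
  unfolding continuous_on_iff
proof (intro ballI allI impI)
  fix x e :: real assume x: "x \<in> {0..1}" and "0 < e"
  then obtain a b where ab: "a \<le> x" "x \<le> b" "0 < x \<Longrightarrow> a < x" "x < 1 \<Longrightarrow> x < b" "F b - F a < e"
    using F_bracket[of x e] by auto
  define d where "d = min (if 0 < x then x - a else 1) (if x < 1 then b - x else 1)"
  have "0 < d" using ab unfolding d_def by auto
  moreover have "dist (F x') (F x) < e" if x': "x' \<in> {0..1}" "dist x' x < d" for x'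
  proof -
    have "a \<le> x'"
    proof (cases "x' < x")
      case True
      then have "0 < x" using x' by simp
      then show ?thesis using x' unfolding d_def dist_real_def by auto
    qed (use ab in simp)
    moreover have "x' \<le> b"
    proof (cases "x < x'")
      case True
      then have "x < 1" using x' by simp
      then show ?thesis using x' unfolding d_def dist_real_def by auto
    qed (use ab in simp)
    ultimately have "F a \<le> F x'" "F x' \<le> F b" "F a \<le> F x" "F x \<le> F b"
      using ab(1,2) F_mono by (simp_all add: monoD)
    then show ?thesis using ab(5) unfolding dist_real_def by linarith
  qed
  ultimately show "\<exists>d>0. \<forall>x'\<in>{0..1}. dist x' x < d \<longrightarrow> dist (F x') (F x) < e" by blast
qed

text \<open>The first cylinder whose image is shorter than \<open>r\<close> has image longer than
  \<open>\<delta> powr t * r powr (t * t)\<close>: its parent is longer than \<open>r powr t\<close>.\<close>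
lemma exists_adm_interval:
  assumes c: "digit_seq N c" and y_in: "\<And>n. F (cyl_left q c n) < y \<and> y < F (cyl_right q c n)"
    and t: "1 < t"
    and bounds: "\<And>n. m \<le> n \<Longrightarrow> cyl_len q c n powr t \<le> F_len c n \<and> F_len c n \<le> cyl_len q c n powr (1 / t)"
    and r: "0 < r" "r < (\<delta> ^ m) powr t"
  shows "\<exists>a b. Fcyl_adm N q F (a, b) \<and> a < y \<and> y < b \<and> b - a \<le> r \<and> \<delta> powr t * r powr (t * t) \<le> b - a"
proof -
  have "\<exists>n. F_len c n \<le> r"
  proof -
    have "eventually (\<lambda>n. cyl_len q c n < r powr t) sequentially"
      using r by (intro order_tendstoD(2)[OF cyl_len_tendsto_0[OF c]]) simp
    then obtain n where n: "m \<le> n" "cyl_len q c n < r powr t"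
      unfolding eventually_sequentially by (meson nle_le)
    have "F_len c n \<le> cyl_len q c n powr (1 / t)" using bounds[OF n(1)] by simp
    also have "\<dots> < (r powr t) powr (1 / t)"
      using n(2) cyl_len_pos[OF c, of n] t by (intro powr_less_mono2) auto
    also have "\<dots> = r" using r t by (simp add: powr_powr)
    finally show ?thesis by (intro exI[of _ n]) simp
  qed
  define n where "n = (LEAST n. F_len c n \<le> r)"
  have n_le: "F_len c n \<le> r" unfolding n_def using \<open>\<exists>n. F_len c n \<le> r\<close> by (rule LeastI_ex)
  have "m < n"
  proof (rule ccontr)
    assume "\<not> m < n"
    then have "F_len c m \<le> r" using F_len_antimono[OF c, of n m] n_le by simp
    moreover have "(\<delta> ^ m) powr t \<le> cyl_len q c m powr t"
      using cyl_len_ge[OF c, of m] \<delta>_pos t by (intro powr_mono2) auto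
    ultimately show False using bounds[of m] r by simp
  qed
  then obtain p where p: "n = Suc p" "m \<le> p" by (cases n) auto
  have "\<not> F_len c p \<le> r" using p(1) not_less_Least[of p "\<lambda>n. F_len c n \<le> r"] unfolding n_def by simp
  then have "r < cyl_len q c p powr (1 / t)" using bounds[OF p(2)] by simp
  then have "r powr t < (cyl_len q c p powr (1 / t)) powr t" using r t by (intro powr_less_mono2) auto
  also have "\<dots> = cyl_len q c p" using t cyl_len_pos[OF c, of p] by (simp add: powr_powr)
  finally have "\<delta> * r powr t \<le> cyl_len q c n"
    using cyl_len_Suc_ge[OF c, of p] \<delta>_pos p(1) by (smt (verit) mult_left_mono)
  then have "(\<delta> * r powr t) powr t \<le> cyl_len q c n powr t" using \<delta>_pos r t by (intro powr_mono2) auto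
  also have "\<dots> \<le> F_len c n" using bounds \<open>m < n\<close> by simp
  finally have "\<delta> powr t * r powr (t * t) \<le> F_len c n" using \<delta>_pos r by (simp add: powr_mult powr_powr)
  moreover have "Fcyl_adm N q F (F (cyl_left q c n), F (cyl_right q c n))"
    unfolding Fcyl_adm_def using c by blast
  ultimately show ?thesis using y_in[of n] n_le by blast
qed

definition regular_pts :: "real \<Rightarrow> nat \<Rightarrow> real set" where
  "regular_pts t m = {y. \<exists>c. digit_seq N c \<and> (\<forall>n. F (cyl_left q c n) < y \<and> y < F (cyl_right q c n))
      \<and> (\<forall>n\<ge>m. cyl_len q c n powr t \<le> F_len c n \<and> F_len c n \<le> cyl_len q c n powr (1 / t))}"

lemma pack0_unc_eq_0_if_regular:
  assumes S: "S \<subseteq> {0..1}" "S \<subseteq> regular_pts t m" and t: "1 < t"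
    and \<alpha>: "0 \<le> \<alpha>" "\<alpha> * (t * t) < \<beta>" and finite: "pack0 (Fcyl_adm N q F) \<alpha> S < \<top>"
  shows "pack0 unc_adm \<beta> S = 0"
proof -
  have good: "\<exists>a b. Fcyl_adm N q F (a, b) \<and> a < y \<and> y < b \<and> b - a \<le> r \<and> \<delta> powr t * r powr (t * t) \<le> b - a"
    if "y \<in> S" "0 < r" "r < (\<delta> ^ m) powr t" for y r
  proof -
    have "y \<in> regular_pts t m" using S(2) that(1) by (rule subsetD)
    then obtain c where c: "digit_seq N c" "\<forall>n. F (cyl_left q c n) < y \<and> y < F (cyl_right q c n)"
      "\<forall>n\<ge>m. cyl_len q c n powr t \<le> F_len c n \<and> F_len c n \<le> cyl_len q c n powr (1 / t)"
      unfolding regular_pts_def by blast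
    show ?thesis by (rule exists_adm_interval[OF c(1) c(2)[rule_format] t c(3)[rule_format] that(2,3)])
  qed
  have pos: "0 < \<delta> powr t" "0 < (\<delta> ^ m) powr t" using \<delta>_pos by simp_all
  show ?thesis
  proof (rule mesh_count_le_if_pack0_finite[OF S(1) \<alpha>(1) pos good finite])
    fix C r1 assume "0 \<le> C" "0 < r1"
      "\<And>r. 0 < r \<Longrightarrow> r \<le> r1 \<Longrightarrow> real (mesh_count S r) \<le> C * r powr (-(\<alpha> * (t * t)))"
    moreover have "0 \<le> \<alpha> * (t * t)" using \<alpha>(1) by simp
    ultimately show ?thesis by (intro pack0_eq_0_if_mesh_count_le[OF S(1) _ \<alpha>(2)])
  qed
qed

lemma regular_pts_cover:
  assumes F01: "F 0 \<le> 0" "1 \<le> F 1" and y: "0 \<le> y" "y \<le> 1" "y \<notin> F ` cyl_ends q" and "1 < t"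
  obtains m where "y \<in> regular_pts t m"
proof -
  obtain x where x: "0 \<le> x" "x \<le> 1" "F x = y"
    using IVT'[of F 0 y 1] continuous_on_F F01 y by auto
  obtain c where c: "digit_seq N c" "\<forall>n. cyl_left q c n \<le> x \<and> x \<le> cyl_right q c n"
    using exists_digits_closed[OF x(1,2)] by blast
  obtain m where m: "\<forall>n\<ge>m. cyl_len q c n powr t \<le> F_len c n \<and> F_len c n \<le> cyl_len q c n powr (1 / t)"
    using eventually_F_len_powr_bounds[OF c(1) x(1,2) _ \<open>1 < t\<close>] c(2)
    unfolding eventually_sequentially by blast
  have strict: "F (cyl_left q c n) < y \<and> y < F (cyl_right q c n)" for n
  proof -
    have "F (cyl_left q c n) \<le> y" "y \<le> F (cyl_right q c n)"
      using c(2) x(3) by (auto intro: monoD[OF F_mono])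
    moreover have "cyl_left q c n \<in> cyl_ends q" "cyl_right q c n \<in> cyl_ends q"
      unfolding cyl_ends_def by blast+
    then have "F (cyl_left q c n) \<noteq> y" "y \<noteq> F (cyl_right q c n)" using y(3) by force+
    ultimately show ?thesis by (simp add: le_neq_trans)
  qed
  have "y \<in> regular_pts t m"
    unfolding regular_pts_def using c(1) m strict by (intro CollectI exI[of _ c]) simp
  then show ?thesis by (rule that)
qed

lemma pack_measure_unc_eq_0_if_Fcyl:
  assumes F01: "F 0 \<le> 0" "1 \<le> F 1" and E: "E \<subseteq> {0..1}" and \<alpha>: "0 \<le> \<alpha>" "\<alpha> < \<beta>"
    and null: "pack_measure (Fcyl_adm N q F) \<alpha> E = 0"
  shows "pack_measure unc_adm \<beta> E = 0"
proof -
  let ?adm = "Fcyl_adm N q F"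
  have "pack_measure ?adm \<alpha> E < \<top>" using null by simp
  then obtain A where A: "E \<subseteq> (\<Union>j. A j)" "(\<Sum>j. pack0 ?adm \<alpha> (A j)) < \<top>"
    unfolding pack_measure_def by (auto simp: INF_less_iff)
  obtain t where t: "1 < t" "\<alpha> * (t * t) < \<beta>" using exists_gt_1_mult_square_less[OF \<alpha>] by blast
  define T where "T = (\<lambda>(j, m). A j \<inter> E \<inter> regular_pts t m) ` UNIV \<union> (\<lambda>p. {p} \<inter> E) ` F ` cyl_ends q"
  show ?thesis
  proof (rule pack_measure_eq_0_if_countable_cover)
    show "countable T" unfolding T_def using countable_cyl_ends by simp
    show "T \<noteq> {}" unfolding T_def by simp
    show "E \<subseteq> \<Union>T"
    proof
      fix y assume "y \<in> E"
      show "y \<in> \<Union>T"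
      proof (cases "y \<in> F ` cyl_ends q")
        case False
        have "0 \<le> y" "y \<le> 1" using E \<open>y \<in> E\<close> by auto
        then obtain m where "y \<in> regular_pts t m" by (rule regular_pts_cover[OF F01 _ _ False t(1)])
        moreover obtain j where "y \<in> A j" using A(1) \<open>y \<in> E\<close> by blast
        ultimately show ?thesis unfolding T_def using \<open>y \<in> E\<close> by blast
      qed (use \<open>y \<in> E\<close> in \<open>auto simp: T_def\<close>)
    qed
  next
    fix S assume "S \<in> T"
    then consider j m where "S = A j \<inter> E \<inter> regular_pts t m" | p where "S = {p} \<inter> E"
      unfolding T_def by auto
    then show "pack0 unc_adm \<beta> S = 0"
    proof cases
      case (1 j m)
      have "pack0 ?adm \<alpha> S \<le> pack0 ?adm \<alpha> (A j)" unfolding 1 by (intro pack0_mono_set) auto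
      also have "\<dots> < \<top>" using A(2) by (rule ennreal_suminf_lessD)
      finally show ?thesis unfolding 1 using E by (intro pack0_unc_eq_0_if_regular[OF _ _ t(1) \<alpha>(1) t(2)]) auto
    qed (use E \<alpha> in \<open>auto intro: pack0_singleton_eq_0\<close>)
  qed
qed

lemma pack_dim_Fcyl_eq_unc:
  assumes "F 0 \<le> 0" "1 \<le> F 1" "E \<subseteq> {0..1}"
  shows "pack_dim (Fcyl_adm N q F) E = pack_dim unc_adm E"
  using assms(3) by (rule pack_dim_eq_unc_if) (rule pack_measure_unc_eq_0_if_Fcyl[OF assms])

lemma eventually_F_len_zero_digits_ge:
  "eventually (\<lambda>n. \<delta> ^ (2 * n) \<le> F_len (\<lambda>_. 0) n) sequentially"
proof -
  have "0 < N j" for j using N_ge_2[of j] by simp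
  then have z: "digit_seq N (\<lambda>_. 0)" unfolding digit_seq_def by simp
  have "cyl_left q (\<lambda>_. 0) n \<le> 0 \<and> 0 \<le> cyl_right q (\<lambda>_. 0) n" for n
    using cyl_len_pos[OF z, of n] by (simp add: cyl_left_def)
  moreover have "1 < (2::real)" by simp
  ultimately have ev: "eventually (\<lambda>n. cyl_len q (\<lambda>_. 0) n powr 2 \<le> F_len (\<lambda>_. 0) n) sequentially"
    using eventually_F_len_powr_bounds[OF z order_refl zero_le_one] by (simp add: eventually_conj_iff)
  have len: "\<delta> ^ (2 * n) \<le> cyl_len q (\<lambda>_. 0) n powr 2" for n
  proof -
    have "\<delta> ^ (2 * n) = (\<delta> ^ n) ^ 2" by (simp add: power_mult[symmetric] mult.commute)
    also have "\<dots> \<le> cyl_len q (\<lambda>_. 0) n ^ 2" using cyl_len_ge[OF z, of n] \<delta>_pos by (simp add: power_mono)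
    finally show ?thesis using cyl_len_pos[OF z, of n] by simp
  qed
  from ev show ?thesis by (rule eventually_mono) (rule order_trans[OF len])
qed

end

section \<open>Random variables with independent Q-digits\<close>

locale Q_digit_variable = Q_expansion + prob_space M for M :: "'a measure" +
  fixes d :: "nat \<Rightarrow> 'a \<Rightarrow> nat"
  assumes indep: "indep_vars (\<lambda>_. count_space UNIV) d UNIV"
    and digits: "\<forall>k. \<forall>\<omega>\<in>space M. d k \<omega> < N k"
begin

lemma measurable_digit [measurable]: "d k \<in> measurable M (count_space UNIV)"
  using indep unfolding indep_vars_def2 by auto

lemma measurable_Qxi [measurable]: "Qxi q d \<in> borel_measurable M"
  unfolding Qxi_def by measurable

lemma digit_seq_digits: "\<omega> \<in> space M \<Longrightarrow> digit_seq N (\<lambda>k. d k \<omega>)"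
  using digits unfolding digit_seq_def by auto

lemma Qxi_bounds:
  assumes "\<omega> \<in> space M"
  shows "cyl_left q (\<lambda>k. d k \<omega>) n \<le> Qxi q d \<omega>" "Qxi q d \<omega> \<le> cyl_right q (\<lambda>k. d k \<omega>) n"
  unfolding Qxi_def using Qseries_bounds[OF digit_seq_digits[OF assms]] by auto

lemma mono_distF: "mono (distF M q d)"
  unfolding distF_def by (intro monoI finite_measure_mono) auto

lemma distF_0: "distF M q d 0 = 0"
proof -
  have "{\<omega> \<in> space M. Qxi q d \<omega> < 0} = {}" using Qxi_bounds(1)[of _ 0] by (auto simp: not_less)
  then show ?thesis unfolding distF_def by (simp only: measure_empty)
qed

lemma prob_digit_prefix:
  "prob {\<omega> \<in> space M. \<forall>j<n. d j \<omega> = c j} = (\<Prod>j<n. prob {\<omega> \<in> space M. d j \<omega> = c j})"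
proof (cases "n = 0")
  case False
  have "indep_sets (\<lambda>i. {d i -` A \<inter> space M | A. A \<in> sets (count_space UNIV)}) UNIV"
    using indep unfolding indep_vars_def2 by auto
  then have "prob (\<Inter>j\<in>{..<n}. d j -` {c j} \<inter> space M) = (\<Prod>j<n. prob (d j -` {c j} \<inter> space M))"
    by (rule indep_setsD) (use False in auto)
  moreover have "{\<omega> \<in> space M. \<forall>j<n. d j \<omega> = c j} = (\<Inter>j\<in>{..<n}. d j -` {c j} \<inter> space M)"
    using False by auto
  ultimately show ?thesis by (simp add: vimage_def Int_def conj_commute)
qed (simp add: prob_space)

lemma prob_Qxi_ge_1_le:
  "prob {\<omega> \<in> space M. 1 \<le> Qxi q d \<omega>} \<le> (\<Prod>j<n. prob {\<omega> \<in> space M. d j \<omega> = N j - 1})"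
proof -
  have "{\<omega> \<in> space M. 1 \<le> Qxi q d \<omega>} \<subseteq> {\<omega> \<in> space M. \<forall>j<n. d j \<omega> = N j - 1}"
  proof safe
    fix \<omega> j assume \<omega>: "\<omega> \<in> space M" "1 \<le> Qxi q d \<omega>" and "j < n"
    show "d j \<omega> = N j - 1"
    proof (rule ccontr)
      assume "d j \<omega> \<noteq> N j - 1"
      moreover have "d j \<omega> < N j" using digits \<omega>(1) by simp
      ultimately have "Suc (d j \<omega>) < N j" by arith
      then have "cyl_right q (\<lambda>k. d k \<omega>) (Suc j) < cyl_right q (\<lambda>k. d k \<omega>) j"
        by (rule cyl_right_Suc_less[OF digit_seq_digits[OF \<omega>(1)]])
      then have "cyl_right q (\<lambda>k. d k \<omega>) (Suc j) < 1"
        using cyl_right_le_1[OF digit_seq_digits[OF \<omega>(1)], of j] by simp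
      then show False using Qxi_bounds(2)[OF \<omega>(1), of "Suc j"] \<omega>(2) by simp
    qed
  qed
  then have "prob {\<omega> \<in> space M. 1 \<le> Qxi q d \<omega>} \<le> prob {\<omega> \<in> space M. \<forall>j<n. d j \<omega> = N j - 1}"
    by (intro finite_measure_mono) measurable
  then show ?thesis by (simp only: prob_digit_prefix)
qed

lemma distF_cyl_len_zeros_le:
  "distF M q d (cyl_len q (\<lambda>_. 0) n) \<le> (\<Prod>j<n. prob {\<omega> \<in> space M. d j \<omega> = 0})"
proof -
  have "{\<omega> \<in> space M. Qxi q d \<omega> < cyl_len q (\<lambda>_. 0) n} \<subseteq> {\<omega> \<in> space M. \<forall>j<n. d j \<omega> = 0}"
  proof safe
    fix \<omega> j assume \<omega>: "\<omega> \<in> space M" "Qxi q d \<omega> < cyl_len q (\<lambda>_. 0) n" and "j < n"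
    show "d j \<omega> = 0"
    proof (rule ccontr)
      assume "d j \<omega> \<noteq> 0"
      then have "cyl_len q (\<lambda>_. 0) n \<le> cyl_left q (\<lambda>k. d k \<omega>) n"
        using \<open>j < n\<close> by (intro cyl_len_zeros_le_cyl_left[OF digit_seq_digits[OF \<omega>(1)]]) auto
      then show False using Qxi_bounds(1)[OF \<omega>(1), of n] \<omega>(2) by simp
    qed
  qed
  then have "distF M q d (cyl_len q (\<lambda>_. 0) n) \<le> prob {\<omega> \<in> space M. \<forall>j<n. d j \<omega> = 0}"
    unfolding distF_def by (intro finite_measure_mono) measurable
  then show ?thesis by (simp only: prob_digit_prefix)
qed

end

text \<open>An atom of \<open>\<xi>\<close> at \<open>1\<close> makes all digits maximal with probability bounded below, so
  zero digits are rare and the zero-digit cylinders at \<open>0\<close> get \<open>F\<close>-measure decaying faster than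
  \<open>\<delta> ^ (2 * n)\<close>, against the log-ratio condition at \<open>0\<close>.\<close>
lemma (in Q_digit_variable) distF_1:
  assumes "Q_regular_dist N q \<delta> (distF M q d)"
  shows "1 \<le> distF M q d 1"
proof (rule ccontr)
  interpret Q_regular_dist N q \<delta> "distF M q d" by (fact assms)
  assume "\<not> 1 \<le> distF M q d 1"
  moreover have "prob {\<omega> \<in> space M. 1 \<le> Qxi q d \<omega>} = 1 - distF M q d 1"
    unfolding distF_def by (subst prob_compl[symmetric]) (auto intro: arg_cong[where f = prob])
  ultimately have atom: "0 < prob {\<omega> \<in> space M. 1 \<le> Qxi q d \<omega>}" by simp
  define p where "p j = prob {\<omega> \<in> space M. d j \<omega> = 0}" for j
  define p' where "p' j = prob {\<omega> \<in> space M. d j \<omega> = N j - 1}" for j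
  have sum: "p j + p' j \<le> 1" for j
  proof -
    have "0 \<noteq> N j - 1" using N_ge_2[of j] by simp
    then have "p j + p' j = prob ({\<omega> \<in> space M. d j \<omega> = 0} \<union> {\<omega> \<in> space M. d j \<omega> = N j - 1})"
      unfolding p_def p'_def by (subst finite_measure_Union) auto
    then show ?thesis by simp
  qed
  have "0 < \<delta> ^ 3" "\<delta> ^ 3 < 1" using \<delta>_pos \<delta>_le_half by (simp_all add: power_less_one_iff)
  moreover have "0 \<le> p j" "0 \<le> p' j" for j unfolding p_def p'_def by simp_all
  ultimately obtain K where K: "\<And>n. (\<Prod>j<n. p j) \<le> (\<delta> ^ 3) ^ (n - K)"
    using prod_le_power_if_prod_complement_ge[of p p', OF _ _ sum atom prob_Qxi_ge_1_le[folded p'_def]]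
    by blast
  obtain m where m: "\<And>n. m \<le> n \<Longrightarrow> \<delta> ^ (2 * n) \<le> F_len (\<lambda>_. 0) n"
    using eventually_F_len_zero_digits_ge unfolding eventually_sequentially by blast
  define n where "n = m + 3 * K + 1"
  have "\<delta> ^ (2 * n) \<le> F_len (\<lambda>_. 0) n" by (rule m) (simp add: n_def)
  also have "\<dots> \<le> (\<Prod>j<n. p j)"
    using distF_cyl_len_zeros_le[of n] distF_0 unfolding p_def by (simp add: cyl_left_def)
  also have "\<dots> \<le> \<delta> ^ (3 * (n - K))" using K by (simp add: power_mult)
  also have "\<dots> < \<delta> ^ (2 * n)"
    using \<delta>_pos \<delta>_le_half unfolding n_def by (intro power_strict_decreasing) auto
  finally show False by simp
qed

theorem lemma2:
  fixes N :: "nat \<Rightarrow> nat" and q :: "nat \<Rightarrow> nat \<Rightarrow> real"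
    and M :: "'a measure" and d :: "nat \<Rightarrow> 'a \<Rightarrow> nat"
  assumes Q: "Qexp N q"
    and inf_pos: "\<exists>\<delta>>0. \<forall>k i. i < N k \<longrightarrow> q i k \<ge> \<delta>"
    and P: "prob_space M"
    and indep: "prob_space.indep_vars M (\<lambda>_. count_space UNIV) d UNIV"
    and digits: "\<forall>k. \<forall>\<omega>\<in>space M. d k \<omega> < N k"
    and lim: "\<forall>x\<in>{0..1}. \<forall>c. digit_seq N c \<and> (\<forall>n. x \<in> cylinder q n c) \<longrightarrow>
        (\<lambda>n. ln (distF M q d (cyl_left q c n + cyl_len q c n) - distF M q d (cyl_left q c n))
              / ln (cyl_len q c n)) \<longlonglongrightarrow> 1"
  shows "\<forall>E. E \<subseteq> {0..1} \<longrightarrow>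
           pack_dim (Fcyl_adm N q (distF M q d)) E = pack_dim unc_adm E"
proof -
  obtain \<delta> where \<delta>: "0 < \<delta>" "\<And>k i. i < N k \<Longrightarrow> \<delta> \<le> q i k" using inf_pos by blast
  interpret Q_digit_variable N q \<delta> M d
    using Q \<delta> P indep digits
    by (intro Q_digit_variable.intro Q_expansion.intro Q_digit_variable_axioms.intro) (auto simp: prob_space_def)
  have regular: "Q_regular_dist N q \<delta> (distF M q d)"
    by (intro Q_regular_dist.intro Q_regular_dist_axioms.intro Q_expansion_axioms mono_distF lim)
  interpret Q_regular_dist N q \<delta> "distF M q d" by (fact regular)
  show ?thesis using pack_dim_Fcyl_eq_unc distF_0 distF_1[OF regular] by simp
qed

end
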